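(* Let $\Gamma,\Delta$ be finite multisets of S4 formulas and $A$ an S4 formula. Suppose $\mathcal T_L$ is a G3s proof of $\Gamma\supset\Delta,A$ and $\mathcal T_R$ is a G3s proof of $A,\Gamma\supset\Delta$, and let $\mathcal T$ be the G3s + (Cut) proof of $\Gamma\supset\Delta$ obtained by combining $\mathcal T_L$ and $\mathcal T_R$ with a final (Cut) rule. If $\mathcal T$ is prehistoric-cycle-free (with families and prehistoric relations computed in $\mathcal T$), then there is a prehistoric-cycle-free G3s proof of $\Gamma\supset\Delta$.
   Context: S4 formulas: $A ::= \bot \mid P \mid A_0\to A_1 \mid \Box A$ ($P$ atomic). Sequents $\Gamma\supset\Delta$ use finite multisets; $\Box\Gamma:=\{\Box C\mid C\in\Gamma\}$. G3s rules: (Ax) $P,\Gamma\supset\Delta,P$ ($P$ atomic); $(\bot\supset)$ $\bot,\Gamma\supset\Delta$; $(\to\supset)$ from $\Gamma\supset\Delta,A$ and $B,\Gamma\supset\Delta$ infer $A\to B,\Gamma\supset\Delta$; $(\supset\to)$ from $A,\Gamma\supset\Delta,B$ infer $\Gamma\supset\Delta,A\to B$; $(\Box\supset)$ from $A,\Box A,\Gamma\supset\Delta$ infer $\Box A,\Gamma\supset\Delta$; $(\supset\Box)$ from $\Box\Gamma\supset A$ infer $\Gamma',\Box\Gamma\supset\Delta',\Box A$. (Cut): from $\Gamma\supset\Delta,A$ and $A,\Gamma\supset\Delta$ infer $\Gamma\supset\Delta$. In a rule instance, formulas of $\Gamma,\Delta,\Box\Gamma$ repeated in premise(s) and conclusion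 are side formulas; $\Gamma',\Delta'$ (and $\Gamma,\Delta$ in axioms) are weakening formulas; the distinguished new formula of the conclusion is the principal formula and the distinguished formulas of the premises are active formulas. Correspondence between symbol occurrences of a proof tree: a symbol occurrence in a side formula of a premise directly corresponds to the same occurrence in the same side formula of the conclusion; an active formula of a premise directly corresponds to the topmost occurrence of that formula as a subformula of the principal formula (so in $(\Box\supset)$ the active $A$ corresponds to the immediate subformula $A$ of the principal $\Box A$ and the active $\Box A$ to the principal $\Box A$), and symbol occurrences inside it directly correspond to the same occurrences inside that subformula; in (Cut) the two active occurrences of the cut formula $A$ (and their symbol occurrences) correspond to each other. Correspondence is the reflexive, symmetric, transitive closure of direct correspondence. A family is an equivalence class of $\Box$-occurrences under correspondence. Family $i$ has a prehistoric relation to family $j$, written $i\prec j$, if there is a $(\supset\Box)$ rule whose principal formula $\Box A$ has its outermost $\Box$ in family $j$ and whose premise contains an occurrence of a $\Box$ belonging to family $i$ (families of any polarity are considered). A prehistoric cycle is a list of families $i_0,\dots,i_{n-1}$ ($n\ge1$) with $i_0\prec i_1\prec\cdots\prec i_{n-1}\prec i_0$; a proof is prehistoric-cycle-free if it has no prehistoric cycle. *)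

theory Defs
  imports "HOL-Library.Multiset"
begin

datatype 'a fm = Bot | At 'a | Imp "'a fm" "'a fm" | Box "'a fm"

text \<open>Positions of formulas in the lists are used
  to make the matching of formula occurrences between premise and conclusion explicit.\<close>

type_synonym 'a seq = "'a fm list \<times> 'a fm list"

definition seq_mset :: "'a seq \<Rightarrow> 'a fm multiset \<times> 'a fm multiset" where
  "seq_mset s = (mset (fst s), mset (snd s))"

definition ins :: "nat \<Rightarrow> 'b \<Rightarrow> 'b list \<Rightarrow> 'b list" where
  "ins j x xs = take j xs @ x # drop j xs"

definition del :: "nat \<Rightarrow> 'b list \<Rightarrow> 'b list" where
  "del i xs = take i xs @ drop (Suc i) xs"

text \<open>index in (del i xs) \<mapsto> index in xs\<close>
definition undel :: "nat \<Rightarrow> nat \<Rightarrow> nat" where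
  "undel i p = (if p < i then p else Suc p)"

text \<open>index (different from j) in (ins j x xs) \<mapsto> index in xs\<close>
definition unins :: "nat \<Rightarrow> nat \<Rightarrow> nat" where
  "unins j p = (if p < j then p else p - 1)"

fun is_atom :: "'a fm \<Rightarrow> bool" where
  "is_atom (At _) = True" | "is_atom _ = False"

fun is_box :: "'a fm \<Rightarrow> bool" where
  "is_box (Box _) = True" | "is_box _ = False"

section \<open>G3s (+ Cut) proof trees\<close>

text \<open>Rule instances, with positional parameters:
  Ax i j: antecedent position i and succedent position j carry the same atom;
  BotL i: antecedent position i is Bot;
  ImpL i j k: principal at antecedent position i; active A inserted at succedent position j
    of premise 1, active B inserted at antecedent position k of premise 2;
  ImpR i j k: principal at succedent position i; active A inserted at antecedent position j,
    active B inserted at succedent position k;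
  BoxL i j k: principal Box A at antecedent position i; premise antecedent is
    ins j A (ins k (Box A) (del i L));
  BoxR ss i: principal Box A at succedent position i; ss lists the (distinct) antecedent
    positions forming Box Gamma, premise is (map (nth L) ss, [A]);
  Cut A j k: premises (L, ins j A R) and (ins k A L, R).\<close>

datatype 'a rule = Ax nat nat | BotL nat | ImpL nat nat nat | ImpR nat nat nat
  | BoxL nat nat nat | BoxR "nat list" nat | Cut "'a fm" nat nat

datatype 'a ptree = Node "'a rule" "'a seq" "'a ptree list"

fun concl :: "'a ptree \<Rightarrow> 'a seq" where
  "concl (Node r s cs) = s"

fun is_cut :: "'a rule \<Rightarrow> bool" where
  "is_cut (Cut _ _ _) = True" | "is_cut _ = False"

fun step_ok :: "'a rule \<Rightarrow> 'a seq \<Rightarrow> 'a seq list \<Rightarrow> bool" where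
  "step_ok (Ax i j) (L, R) ps =
     (ps = [] \<and> i < length L \<and> j < length R \<and> L ! i = R ! j \<and> is_atom (L ! i))"
| "step_ok (BotL i) (L, R) ps = (ps = [] \<and> i < length L \<and> L ! i = Bot)"
| "step_ok (ImpL i j k) (L, R) ps =
     (i < length L \<and> j \<le> length R \<and> k < length L \<and>
      (\<exists>A B. L ! i = Imp A B \<and>
         ps = [(del i L, ins j A R), (ins k B (del i L), R)]))"
| "step_ok (ImpR i j k) (L, R) ps =
     (i < length R \<and> j \<le> length L \<and> k < length R \<and>
      (\<exists>A B. R ! i = Imp A B \<and> ps = [(ins j A L, ins k B (del i R))]))"
| "step_ok (BoxL i j k) (L, R) ps =
     (i < length L \<and> k < length L \<and> j \<le> length L \<and>
      (\<exists>A. L ! i = Box A \<and> ps = [(ins j A (ins k (Box A) (del i L)), R)]))"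
| "step_ok (BoxR ss i) (L, R) ps =
     (i < length R \<and> distinct ss \<and> (\<forall>s\<in>set ss. s < length L \<and> is_box (L ! s)) \<and>
      (\<exists>A. R ! i = Box A \<and> ps = [(map (nth L) ss, [A])]))"
| "step_ok (Cut A j k) (L, R) ps =
     (j \<le> length R \<and> k \<le> length L \<and> ps = [(L, ins j A R), (ins k A L, R)])"

fun valid :: "bool \<Rightarrow> 'a ptree \<Rightarrow> bool" where
  "valid c (Node r s cs) =
     ((c \<or> \<not> is_cut r) \<and> step_ok r s (map concl cs) \<and> list_all (valid c) cs)"

section \<open>Symbol occurrences and correspondence\<close>

text \<open>Node addresses are paths from the root (a @ [c] is the c-th premise of node a).
  A symbol occurrence is (node address, side, formula index, position in formula);
  side False = antecedent, True = succedent; position [] is the outermost symbol,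
  0 # q / 1 # q go into the left / right argument of Imp, 0 # q into the argument of Box.\<close>

type_synonym occ = "nat list \<times> bool \<times> nat \<times> nat list"

fun subtree :: "'a ptree \<Rightarrow> nat list \<Rightarrow> 'a ptree option" where
  "subtree t [] = Some t"
| "subtree (Node r s cs) (c # a) = (if c < length cs then subtree (cs ! c) a else None)"

fun subfm :: "'a fm \<Rightarrow> nat list \<Rightarrow> 'a fm option" where
  "subfm A [] = Some A"
| "subfm (Imp A B) (n # q) = (if n = 0 then subfm A q else if n = 1 then subfm B q else None)"
| "subfm (Box A) (n # q) = (if n = 0 then subfm A q else None)"
| "subfm _ _ = None"

definition seq_fm :: "'a seq \<Rightarrow> bool \<Rightarrow> nat \<Rightarrow> 'a fm option" where
  "seq_fm s side i = (let xs = (if side then snd s else fst s) in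
                        if i < length xs then Some (xs ! i) else None)"

definition fm_at :: "'a ptree \<Rightarrow> occ \<Rightarrow> 'a fm option" where
  "fm_at T oc = (case oc of (a, side, i, q) \<Rightarrow>
     (case subtree T a of None \<Rightarrow> None
      | Some t \<Rightarrow> (case seq_fm (concl t) side i of None \<Rightarrow> None
                   | Some B \<Rightarrow> subfm B q)))"

definition is_occ :: "'a ptree \<Rightarrow> occ \<Rightarrow> bool" where
  "is_occ T oc = (fm_at T oc \<noteq> None)"

definition box_occ :: "'a ptree \<Rightarrow> occ \<Rightarrow> bool" where
  "box_occ T oc = (\<exists>B. fm_at T oc = Some (Box B))"

text \<open>up r c side p: the formula at (side, p) of premise c of rule instance r corresponds
  to the formula at (side', p') of the conclusion, with its symbols placed below position
  prefix pre: Some (side', p', pre). Side formulas have pre = []; active formulas point to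
  their topmost occurrence as a subformula of the principal formula. None for the active
  cut formulas (handled separately) and non-existent premises.\<close>

fun up :: "'a rule \<Rightarrow> nat \<Rightarrow> bool \<Rightarrow> nat \<Rightarrow> (bool \<times> nat \<times> nat list) option" where
  "up (ImpL i j k) c side p =
     (if c = 0 then
        (if \<not> side then Some (False, undel i p, [])
         else if p = j then Some (False, i, [0]) else Some (True, unins j p, []))
      else if c = 1 then
        (if \<not> side then (if p = k then Some (False, i, [1]) else Some (False, undel i (unins k p), []))
         else Some (True, p, []))
      else None)"
| "up (ImpR i j k) c side p =
     (if c = 0 then
        (if \<not> side then (if p = j then Some (True, i, [0]) else Some (False, unins j p, []))
         else if p = k then Some (True, i, [1]) else Some (True, undel i (unins k p), []))
      else None)"
| "up (BoxL i j k) c side p =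
     (if c = 0 then
        (if \<not> side then
           (if p = j then Some (False, i, [0])
            else if unins j p = k then Some (False, i, [])
            else Some (False, undel i (unins k (unins j p)), []))
         else Some (True, p, []))
      else None)"
| "up (BoxR ss i) c side p =
     (if c = 0 then
        (if \<not> side then (if p < length ss then Some (False, ss ! p, []) else None)
         else Some (True, i, [0]))
      else None)"
| "up (Cut A j k) c side p =
     (if c = 0 then
        (if \<not> side then Some (False, p, [])
         else if p = j then None else Some (True, unins j p, []))
      else if c = 1 then
        (if \<not> side then (if p = k then None else Some (False, unins k p, []))
         else Some (True, p, []))
      else None)"
| "up _ _ _ _ = None"

definition dcorr :: "'a ptree \<Rightarrow> occ \<Rightarrow> occ \<Rightarrow> bool" where
  "dcorr T o1 o2 \<longleftrightarrow> is_occ T o1 \<and> is_occ T o2 \<and>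
     ((\<exists>a c side p q r s cs side' p' pre.
         subtree T a = Some (Node r s cs) \<and> c < length cs \<and>
         o1 = (a @ [c], side, p, q) \<and> up r c side p = Some (side', p', pre) \<and>
         o2 = (a, side', p', pre @ q))
    \<or> (\<exists>a A j k s cs q.
         subtree T a = Some (Node (Cut A j k) s cs) \<and> length cs = 2 \<and>
         o1 = (a @ [0], True, j, q) \<and> o2 = (a @ [1], False, k, q)))"

definition corr :: "'a ptree \<Rightarrow> occ \<Rightarrow> occ \<Rightarrow> bool" where
  "corr T = (\<lambda>o1 o2. dcorr T o1 o2 \<or> dcorr T o2 o1)\<^sup>*\<^sup>*"

definition family :: "'a ptree \<Rightarrow> occ \<Rightarrow> occ set" where
  "family T oc = {o'. box_occ T o' \<and> corr T oc o'}"

definition families :: "'a ptree \<Rightarrow> occ set set" where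
  "families T = {family T oc | oc. box_occ T oc}"

definition prehist :: "'a ptree \<Rightarrow> occ set \<Rightarrow> occ set \<Rightarrow> bool" where
  "prehist T F G \<longleftrightarrow> F \<in> families T \<and> G \<in> families T \<and>
     (\<exists>a ss i s cs oc. subtree T a = Some (Node (BoxR ss i) s cs) \<and>
        (a, True, i, []) \<in> G \<and> box_occ T oc \<and> fst oc = a @ [0] \<and> oc \<in> F)"

definition prehist_cycle_free :: "'a ptree \<Rightarrow> bool" where
  "prehist_cycle_free T \<longleftrightarrow>
     \<not> (\<exists>fs. fs \<noteq> [] \<and>
          (\<forall>n < length fs. prehist T (fs ! n) (fs ! ((n + 1) mod length fs))))"

end

theory Submission
  imports Defs
begin

(* Label every box occurrence of the cut proof T with its family. Since T is
   prehistoric-cycle-free, the transitive closure of the prehistoric relation is a strict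
   order on these labels. Both subproofs of the final cut are derivations in a labelled
   cut-free calculus in which a (\<supset>\<box>) step may only have labels strictly below its principal
   label in its premise, and this calculus admits cut: in the one delicate case, a cut on a
   box that is principal in two (\<supset>\<box>) steps, the two box contexts are merged and their
   labels stay below by transitivity. Erasing the labels of the resulting cut-free
   derivation gives a G3s proof in which each family carries a single label and each
   prehistoric step strictly raises it, so the proof has no prehistoric cycle. *)

section \<open>A labelled sequent calculus\<close>

datatype ('a, 'l) lfm = LBot | LAt 'a | LImp "('a, 'l) lfm" "('a, 'l) lfm" | LBox 'l "('a, 'l) lfm"

fun labels :: "('a, 'l) lfm \<Rightarrow> 'l set" where
  "labels (LImp A B) = labels A \<union> labels B"
| "labels (LBox l A) = insert l (labels A)"
| "labels _ = {}"

fun is_lbox :: "('a, 'l) lfm \<Rightarrow> bool" where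
  "is_lbox (LBox _ _) = True"
| "is_lbox _ = False"

text \<open>\<open>lder rel n G D\<close>: the labelled sequent \<open>G \<supset> D\<close> has a cut-free derivation of height at
  most \<open>n\<close> in which every label in the premise of a (\<open>\<supset>\<box>\<close>) step is \<open>rel\<close>-below the
  principal label.\<close>

inductive lder :: "('l \<Rightarrow> 'l \<Rightarrow> bool) \<Rightarrow> nat \<Rightarrow> ('a, 'l) lfm multiset \<Rightarrow> ('a, 'l) lfm multiset \<Rightarrow> bool"
  for rel where
  ax: "LAt P \<in># G \<Longrightarrow> LAt P \<in># D \<Longrightarrow> lder rel n G D"
| bot: "LBot \<in># G \<Longrightarrow> lder rel n G D"
| impL: "lder rel n G (add_mset A D) \<Longrightarrow> lder rel n (add_mset B G) D \<Longrightarrow>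
    lder rel (Suc n) (add_mset (LImp A B) G) D"
| impR: "lder rel n (add_mset A G) (add_mset B D) \<Longrightarrow> lder rel (Suc n) G (add_mset (LImp A B) D)"
| boxL: "lder rel n (add_mset A (add_mset (LBox l A) G)) D \<Longrightarrow> lder rel (Suc n) (add_mset (LBox l A) G) D"
| boxR: "lder rel n B {#A#} \<Longrightarrow> \<forall>x\<in>#B. is_lbox x \<Longrightarrow> \<forall>x\<in>#add_mset A B. \<forall>k\<in>labels x. rel k l \<Longrightarrow>
    lder rel (Suc n) (G + B) (add_mset (LBox l A) D)"

abbreviation lprov :: "('l \<Rightarrow> 'l \<Rightarrow> bool) \<Rightarrow> ('a, 'l) lfm multiset \<Rightarrow> ('a, 'l) lfm multiset \<Rightarrow> bool" where
  "lprov rel G D \<equiv> \<exists>n. lder rel n G D"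

lemma lder_Suc: "lder rel n G D \<Longrightarrow> lder rel (Suc n) G D"
proof (induction rule: lder.induct)
  case (boxR n B A l G D)
  then show ?case by (blast intro: lder.boxR)
qed (auto intro: lder.intros)

lemma lder_mono: "lder rel n G D \<Longrightarrow> n \<le> m \<Longrightarrow> lder rel m G D"
  by (induction m) (auto simp: le_Suc_eq intro: lder_Suc)

lemma lder_common_height:
  assumes "lder rel n G D" and "lder rel n' G' D'"
  obtains k where "lder rel k G D" and "lder rel k G' D'"
  using assms lder_mono max.cobounded1 max.cobounded2 by metis

lemma lder_weaken: "lder rel n G D \<Longrightarrow> lder rel n (G + G') (D + D')"
proof (induction arbitrary: G' D' rule: lder.induct)
  case (boxR n B A l G D)
  from lder.boxR[OF boxR(1-3), of "G + G'" "D + D'"] show ?case by (simp add: ac_simps)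
qed (auto intro: lder.intros)

lemma lder_weakenL: "lder rel n G D \<Longrightarrow> lder rel n (add_mset X G) D"
  using lder_weaken[of rel n G D "{#X#}" "{#}"] by simp

lemma lder_weakenR: "lder rel n G D \<Longrightarrow> lder rel n G (add_mset X D)"
  using lder_weaken[of rel n G D "{#}" "{#X#}"] by simp

lemma lder_subset: "lder rel n G D \<Longrightarrow> G \<subseteq># G' \<Longrightarrow> lder rel n G' D"
  using lder_weaken[of rel n G D "G' - G" "{#}"] by (simp add: subset_mset.add_diff_inverse)

lemma add_mset_eq_union_not_in:
  assumes "add_mset x G = G' + B" and "x \<notin># B"
  obtains K where "G' = add_mset x K" and "G = K + B"
proof -
  have "x \<in># G'" using assms by (metis union_iff union_single_eq_member)
  then obtain K where K: "G' = add_mset x K" by (blast dest: multi_member_split)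
  with assms(1) have "G = K + B" by simp
  with K show thesis by (rule that)
qed

lemma lder_inv_impL:
  "lder rel n (add_mset (LImp A B) G) D \<Longrightarrow> lder rel n G (add_mset A D) \<and> lder rel n (add_mset B G) D"
proof (induction n "add_mset (LImp A B) G" D arbitrary: G rule: lder.induct)
  case ax
  then show ?case by (auto intro: lder.ax)
next
  case bot
  then show ?case by (auto intro: lder.bot)
next
  case (impL n G' X D Y)
  show ?case
  proof (cases "LImp X Y = LImp A B")
    case True
    with impL.hyps(1,3,5) show ?thesis by (auto intro: lder_Suc)
  next
    case False
    with impL.hyps(5) obtain K where K: "G' = add_mset (LImp A B) K" "G = add_mset (LImp X Y) K"
      by (auto simp: add_eq_conv_ex)
    have "add_mset Y G' = add_mset (LImp A B) (add_mset Y K)"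
      using K(1) by (simp add: add_mset_commute)
    with impL.hyps(2)[OF K(1)] impL.hyps(4)
    have "lder rel n K (add_mset A (add_mset X D))" "lder rel n (add_mset B K) (add_mset X D)"
      "lder rel n (add_mset Y K) (add_mset A D)" "lder rel n (add_mset B (add_mset Y K)) D"
      by blast+
    with lder.impL[of rel n K X "add_mset A D" Y] lder.impL[of rel n "add_mset B K" X D Y] K
    show ?thesis by (simp add: add_mset_commute)
  qed
next
  case (impR n X Y D)
  from impR.hyps(2)[of "add_mset X G"]
  have "lder rel n (add_mset X G) (add_mset A (add_mset Y D))"
    "lder rel n (add_mset B (add_mset X G)) (add_mset Y D)"
    by (simp_all add: add_mset_commute)
  with lder.impR[of rel n X G Y "add_mset A D"] lder.impR[of rel n X "add_mset B G" Y D]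
  show ?case by (simp add: add_mset_commute)
next
  case (boxL n X l G' D)
  from \<open>add_mset (LBox l X) G' = add_mset (LImp A B) G\<close>
  obtain K where K: "G' = add_mset (LImp A B) K" "G = add_mset (LBox l X) K"
    by (auto simp: add_eq_conv_ex)
  have "add_mset X (add_mset (LBox l X) G') = add_mset (LImp A B) (add_mset X (add_mset (LBox l X) K))"
    using K(1) by (simp add: add_mset_commute)
  from boxL.hyps(2)[OF this]
  have "lder rel n (add_mset X (add_mset (LBox l X) K)) (add_mset A D)"
    "lder rel n (add_mset B (add_mset X (add_mset (LBox l X) K))) D"
    by blast+
  with lder.boxL[of rel n X l K "add_mset A D"] lder.boxL[of rel n X l "add_mset B K" D] K
  show ?case by (simp add: add_mset_commute)
next
  case (boxR n B' X l G' D)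
  have "LImp A B \<notin># B'" using boxR.hyps(3) by auto
  with boxR.hyps(5)[symmetric] obtain K where "G' = add_mset (LImp A B) K" "G = K + B'"
    by (rule add_mset_eq_union_not_in)
  with lder.boxR[OF boxR.hyps(1,3,4), of K "add_mset A D"]
    lder.boxR[OF boxR.hyps(1,3,4), of "add_mset B K" D]
  show ?case by (simp add: add_mset_commute)
qed

lemma lder_inv_impR:
  "lder rel n G (add_mset (LImp A B) D) \<Longrightarrow> lder rel n (add_mset A G) (add_mset B D)"
proof (induction n G "add_mset (LImp A B) D" arbitrary: D rule: lder.induct)
  case ax
  then show ?case by (auto intro: lder.ax)
next
  case bot
  then show ?case by (auto intro: lder.bot)
next
  case (impL n G X Y)
  from impL.hyps(2)[of "add_mset X D"] impL.hyps(4)[of D]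
  have "lder rel n (add_mset A G) (add_mset X (add_mset B D))"
    "lder rel n (add_mset Y (add_mset A G)) (add_mset B D)"
    by (simp_all add: add_mset_commute)
  with lder.impL[of rel n "add_mset A G" X "add_mset B D" Y] show ?case
    by (simp add: add_mset_commute)
next
  case (impR n X G Y D')
  show ?case
  proof (cases "LImp X Y = LImp A B")
    case True
    with impR.hyps(1,3) show ?thesis by (auto intro: lder_Suc)
  next
    case False
    with impR.hyps(3) obtain K where K: "D' = add_mset (LImp A B) K" "D = add_mset (LImp X Y) K"
      by (auto simp: add_eq_conv_ex)
    have "add_mset Y D' = add_mset (LImp A B) (add_mset Y K)"
      using K(1) by (simp add: add_mset_commute)
    from impR.hyps(2)[OF this]
    have "lder rel n (add_mset X (add_mset A G)) (add_mset Y (add_mset B K))"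
      by (simp add: add_mset_commute)
    with lder.impR[of rel n X "add_mset A G" Y "add_mset B K"] K show ?thesis
      by (simp add: add_mset_commute)
  qed
next
  case (boxL n X l G)
  from boxL.hyps(2)[of D]
  have "lder rel n (add_mset X (add_mset (LBox l X) (add_mset A G))) (add_mset B D)"
    by (simp add: add_mset_commute)
  with lder.boxL[of rel n X l "add_mset A G" "add_mset B D"] show ?case
    by (simp add: add_mset_commute)
next
  case (boxR n B' X l G D')
  from boxR.hyps(5) obtain K where K: "D' = add_mset (LImp A B) K" "D = add_mset (LBox l X) K"
    by (auto simp: add_eq_conv_ex)
  with lder.boxR[OF boxR.hyps(1,3,4), of "add_mset A G" "add_mset B K"] show ?case
    by (simp add: add_mset_commute)
qed

lemma lder_contract_atom:
  "lder rel n (add_mset (LAt P) (add_mset (LAt P) G)) D \<Longrightarrow> lder rel n (add_mset (LAt P) G) D"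
proof (induction n "add_mset (LAt P) (add_mset (LAt P) G)" D arbitrary: G rule: lder.induct)
  case ax
  then show ?case by (auto intro: lder.ax)
next
  case bot
  then show ?case by (auto intro: lder.bot)
next
  case (impL n G' X D Y)
  from impL.hyps(5) obtain K where K: "G' = add_mset (LAt P) (add_mset (LAt P) K)" "G = add_mset (LImp X Y) K"
    by (auto simp: add_eq_conv_ex)
  have "add_mset Y G' = add_mset (LAt P) (add_mset (LAt P) (add_mset Y K))"
    using K(1) by (simp add: add_mset_commute)
  with impL.hyps(2)[OF K(1)] impL.hyps(4)
  have "lder rel n (add_mset (LAt P) K) (add_mset X D)" "lder rel n (add_mset (LAt P) (add_mset Y K)) D"
    by blast+
  with lder.impL[of rel n "add_mset (LAt P) K" X D Y] K show ?case
    by (simp add: add_mset_commute)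
next
  case (impR n X Y D)
  from impR.hyps(2)[of "add_mset X G"]
  have "lder rel n (add_mset X (add_mset (LAt P) G)) (add_mset Y D)"
    by (simp add: add_mset_commute)
  with lder.impR[of rel n X "add_mset (LAt P) G" Y D] show ?case
    by (simp add: add_mset_commute)
next
  case (boxL n X l G' D)
  from boxL.hyps(3) obtain K where K: "G' = add_mset (LAt P) (add_mset (LAt P) K)" "G = add_mset (LBox l X) K"
    by (auto simp: add_eq_conv_ex)
  have "add_mset X (add_mset (LBox l X) G') = add_mset (LAt P) (add_mset (LAt P) (add_mset X (add_mset (LBox l X) K)))"
    using K(1) by (simp add: add_mset_commute)
  from boxL.hyps(2)[OF this]
  have "lder rel n (add_mset (LAt P) (add_mset X (add_mset (LBox l X) K))) D" .
  with lder.boxL[of rel n X l "add_mset (LAt P) K" D] K show ?case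
    by (simp add: add_mset_commute)
next
  case (boxR n B' X l G' D)
  have "LAt P \<notin># B'" using boxR.hyps(3) by auto
  with boxR.hyps(5)[symmetric] obtain K1 where K1: "G' = add_mset (LAt P) K1" "add_mset (LAt P) G = K1 + B'"
    by (rule add_mset_eq_union_not_in)
  from K1(2) \<open>LAt P \<notin># B'\<close> obtain K where "K1 = add_mset (LAt P) K" "G = K + B'"
    by (rule add_mset_eq_union_not_in)
  with K1 lder.boxR[OF boxR.hyps(1,3,4), of "add_mset (LAt P) K" D] show ?case
    by simp
qed

section \<open>Cut admissibility\<close>

definition boxR_last :: "('l \<Rightarrow> 'l \<Rightarrow> bool) \<Rightarrow> nat \<Rightarrow> ('a, 'l) lfm multiset \<Rightarrow> 'l \<Rightarrow> ('a, 'l) lfm \<Rightarrow> bool" where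
  "boxR_last rel n G l X \<longleftrightarrow> (\<exists>G0 B n0. G = G0 + B \<and> n = Suc n0 \<and> lder rel n0 B {#X#} \<and>
     (\<forall>x\<in>#B. is_lbox x) \<and> (\<forall>x\<in>#add_mset X B. \<forall>k\<in>labels x. rel k l))"

text \<open>The induction hypotheses for eliminating a cut on \<open>C\<close> between derivations of heights
  \<open>n\<close> and \<open>m\<close>.\<close>

locale cut_induction =
  fixes rel :: "'l \<Rightarrow> 'l \<Rightarrow> bool" and C :: "('a, 'l) lfm" and n m :: nat
  assumes trans: "transp rel"
    and cut_smaller: "\<And>(C' :: ('a, 'l) lfm) n' m' G D. size C' < size C \<Longrightarrow> lder rel n' G (add_mset C' D) \<Longrightarrow>
      lder rel m' (add_mset C' G) D \<Longrightarrow> lprov rel G D"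
    and cut_lower: "\<And>n' m' G D. n' + m' < n + m \<Longrightarrow> lder rel n' G (add_mset C D) \<Longrightarrow>
      lder rel m' (add_mset C G) D \<Longrightarrow> lprov rel G D"
begin

lemma cut_impR_impL:
  assumes C: "C = LImp X Y" and L: "lder rel n G (add_mset C D)"
    and R: "lder rel m' G (add_mset X D)" "lder rel m' (add_mset Y G) D"
  shows "lprov rel G D"
proof -
  from L C have "lder rel n (add_mset X G) (add_mset Y D)" by (simp add: lder_inv_impR)
  moreover from lder_weakenR[OF R(1), of Y] have "lder rel m' G (add_mset X (add_mset Y D))"
    by (simp add: add_mset_commute)
  ultimately obtain k where "lder rel k G (add_mset Y D)"
    using cut_smaller[of X] C by fastforce
  with R(2) show ?thesis using cut_smaller[of Y] C by fastforce
qed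

lemma cut_boxR_boxL:
  assumes C: "C = LBox l X" and L: "lder rel n G (add_mset C D)" and L_box: "boxR_last rel n G l X"
    and R: "lder rel m' (add_mset X (add_mset C G)) D" and m: "m = Suc m'"
  shows "lprov rel G D"
proof -
  from L_box obtain G0 B n' where B: "G = G0 + B" "lder rel n' B {#X#}"
    unfolding boxR_last_def by blast
  from lder_weakenL[OF L, of X] R m obtain k where "lder rel k (add_mset X G) D"
    using cut_lower[of n m' "add_mset X G" D] by (auto simp: add_mset_commute)
  moreover from lder_weaken[OF B(2), of G0 D] B(1) have "lder rel n' G (add_mset X D)"
    by (simp add: ac_simps)
  ultimately show ?thesis using cut_smaller[of X] C by fastforce
qed

lemma cut_boxR_boxR:
  assumes C: "C = LBox l X" and L_box: "boxR_last rel n G l X" and G: "G = G1 + B1"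
    and R: "lder rel m' (add_mset C B1) {#Y#}" "\<forall>x\<in>#add_mset C B1. is_lbox x"
      "\<forall>x\<in>#add_mset Y (add_mset C B1). \<forall>k\<in>labels x. rel k l'"
    and m: "m = Suc m'"
  shows "lprov rel G (add_mset (LBox l' Y) D)"
proof -
  from L_box obtain G0 B n' where B: "G = G0 + B" "n = Suc n'" "lder rel n' B {#X#}"
    "\<forall>x\<in>#B. is_lbox x" "\<forall>x\<in>#add_mset X B. \<forall>k\<in>labels x. rel k l"
    unfolding boxR_last_def by blast
  \<comment> \<open>The cut moves into the premise of the right (\<open>\<supset>\<box>\<close>) step, over the union of both box contexts.\<close>
  define M where "M = B \<union># B1"
  have "B \<subseteq># G" using B(1) by simp
  moreover have "B1 \<subseteq># G" using G by simp
  ultimately have sub: "B \<subseteq># M" "B1 \<subseteq># M" "M \<subseteq># G" by (simp_all add: M_def)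
  from lder.boxR[OF B(3-5), of "M - B" "{#}"] sub(1) B(2) C
  have "lder rel n M {#C#}" by (simp add: subset_mset.diff_add)
  from lder_weakenR[OF this, of Y] have "lder rel n M {#C, Y#}" by (simp add: add_mset_commute)
  moreover from R(1) sub(2) have "lder rel m' (add_mset C M) {#Y#}" by (simp add: lder_subset)
  ultimately obtain k where k: "lder rel k M {#Y#}"
    using cut_lower[of n m' M "{#Y#}"] m by fastforce
  have boxes: "\<forall>x\<in>#M. is_lbox x" using B(4) R(2) by (auto simp: M_def)
  have "rel l l'" using R(3) C by simp
  then have "\<forall>x\<in>#add_mset Y M. \<forall>k\<in>labels x. rel k l'"
    using B(5) R(3) trans by (auto simp: M_def elim: transpE)
  from lder.boxR[OF k boxes this, of "G - M" D] sub(3) show ?thesis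
    by (auto simp: subset_mset.diff_add)
qed

text \<open>Cuts on a formula that is principal in the left derivation: reduce, or permute the cut
  into the right derivation.\<close>

lemma cut_right_impL:
  assumes L: "lder rel n G (add_mset C D)"
    and m: "m = Suc m'" and G: "add_mset C G = add_mset (LImp X Y) G1"
    and R: "lder rel m' G1 (add_mset X D)" "lder rel m' (add_mset Y G1) D"
  shows "lprov rel G D"
proof (cases "C = LImp X Y")
  case True
  with G R L show ?thesis by (auto intro: cut_impR_impL)
next
  case False
  with G obtain K where K: "G = add_mset (LImp X Y) K" "G1 = add_mset C K"
    by (auto simp: add_eq_conv_ex)
  from lder_inv_impL[of rel n X Y K "add_mset C D"] L K
  have "lder rel n K (add_mset C (add_mset X D))" "lder rel n (add_mset Y K) (add_mset C D)"
    by (simp_all add: add_mset_commute)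
  with R K m obtain k1 k2 where "lder rel k1 K (add_mset X D)" "lder rel k2 (add_mset Y K) D"
    using cut_lower[of n m'] by (metis add_mset_commute lessI add_Suc_right)
  then obtain k where "lder rel k K (add_mset X D)" "lder rel k (add_mset Y K) D"
    by (rule lder_common_height)
  from lder.impL[OF this] K show ?thesis by blast
qed

lemma cut_right_boxL:
  assumes L: "lder rel n G (add_mset C D)" and L_box: "\<And>l X. C = LBox l X \<Longrightarrow> boxR_last rel n G l X"
    and m: "m = Suc m'" and G: "add_mset C G = add_mset (LBox l X) G1"
    and R: "lder rel m' (add_mset X (add_mset (LBox l X) G1)) D"
  shows "lprov rel G D"
proof (cases "C = LBox l X")
  case True
  with G R m L_box[OF True] show ?thesis using cut_boxR_boxL[OF True L] by auto
next
  case False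
  with G obtain K where K: "G = add_mset (LBox l X) K" "G1 = add_mset C K"
    by (auto simp: add_eq_conv_ex)
  from R K have "lder rel m' (add_mset C (add_mset X G)) D" by (simp add: add_mset_commute)
  with lder_weakenL[OF L, of X] m obtain k where "lder rel k (add_mset X G) D"
    using cut_lower[of n m'] by fastforce
  with lder.boxL[of rel k X l K D] K show ?thesis by blast
qed

lemma cut_right_boxR:
  assumes L_box: "\<And>l X. C = LBox l X \<Longrightarrow> boxR_last rel n G l X"
    and m: "m = Suc m'" and G: "add_mset C G = G1 + B" and D: "D = add_mset (LBox l Y) D1"
    and R: "lder rel m' B {#Y#}" "\<forall>x\<in>#B. is_lbox x" "\<forall>x\<in>#add_mset Y B. \<forall>k\<in>labels x. rel k l"
  shows "lprov rel G D"
proof (cases "C \<in># B")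
  case True
  then obtain B1 where B: "B = add_mset C B1" by (blast dest: multi_member_split)
  with G have "G = G1 + B1" by simp
  moreover from True R(2) obtain l0 X0 where "C = LBox l0 X0" by (cases C) auto
  ultimately show ?thesis using cut_boxR_boxR L_box R B m D by blast
next
  case False
  with G obtain K where "G = K + B" by (metis add_mset_eq_union_not_in)
  with lder.boxR[OF R, of K D1] D show ?thesis by blast
qed

lemma cut_right:
  assumes L: "lder rel n G (add_mset C D)" and R: "lder rel m (add_mset C G) D"
    and C: "\<forall>P. C \<noteq> LAt P" "C \<noteq> LBot" and L_box: "\<And>l X. C = LBox l X \<Longrightarrow> boxR_last rel n G l X"
  shows "lprov rel G D"
  using R
proof cases
  case (ax P)
  with C show ?thesis by (auto intro: lder.ax)
next
  case bot
  with C show ?thesis by (auto intro: lder.bot)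
next
  case impL
  with L show ?thesis by (rule cut_right_impL)
next
  case (impR m' X Y D1)
  from L impR(2) have "lder rel n G (add_mset (LImp X Y) (add_mset C D1))"
    by (simp add: add_mset_commute)
  from lder_inv_impR[OF this] have "lder rel n (add_mset X G) (add_mset C (add_mset Y D1))"
    by (simp add: add_mset_commute)
  with impR(1,3) obtain k where "lder rel k (add_mset X G) (add_mset Y D1)"
    using cut_lower[of n m'] by (fastforce simp: add_mset_commute)
  from lder.impR[OF this] impR(2) show ?thesis by blast
next
  case boxL
  with L L_box show ?thesis by (rule cut_right_boxL)
next
  case boxR
  with L_box show ?thesis by (rule cut_right_boxR)
qed

text \<open>Cuts on a formula that is not principal in the left derivation: permute the cut into the
  left derivation.\<close>

lemma cut_left_impL:
  assumes R: "lder rel m (add_mset C G) D"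
    and n: "n = Suc n'" and G: "G = add_mset (LImp X Y) G0"
    and L: "lder rel n' G0 (add_mset X (add_mset C D))" "lder rel n' (add_mset Y G0) (add_mset C D)"
  shows "lprov rel G D"
proof -
  from R G lder_inv_impL[of rel m X Y "add_mset C G0" D]
  have "lder rel m (add_mset C G0) (add_mset X D)" "lder rel m (add_mset C (add_mset Y G0)) D"
    by (simp_all add: add_mset_commute)
  with L n obtain k1 k2 where "lder rel k1 G0 (add_mset X D)" "lder rel k2 (add_mset Y G0) D"
    using cut_lower[of n' m] by (fastforce simp: add_mset_commute)
  then obtain k where "lder rel k G0 (add_mset X D)" "lder rel k (add_mset Y G0) D"
    by (rule lder_common_height)
  from lder.impL[OF this] G show ?thesis by blast
qed

lemma cut_left_impR:
  assumes R: "lder rel m (add_mset C G) D" and C: "C \<noteq> LImp X Y"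
    and n: "n = Suc n'" and D: "add_mset C D = add_mset (LImp X Y) D0"
    and L: "lder rel n' (add_mset X G) (add_mset Y D0)"
  shows "lprov rel G D"
proof -
  from C D obtain K where K: "D = add_mset (LImp X Y) K" "D0 = add_mset C K"
    by (auto simp: add_eq_conv_ex)
  from R K lder_inv_impR[of rel m "add_mset C G" X Y K]
  have "lder rel m (add_mset C (add_mset X G)) (add_mset Y K)" by (simp add: add_mset_commute)
  with L n K obtain k where "lder rel k (add_mset X G) (add_mset Y K)"
    using cut_lower[of n' m] by (fastforce simp: add_mset_commute)
  from lder.impR[OF this] K show ?thesis by blast
qed

lemma cut_left:
  assumes L: "lder rel n G (add_mset C D)" and R: "lder rel m (add_mset C G) D"
  shows "lprov rel G D"
  using L
proof cases
  case (ax P)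
  show ?thesis
  proof (cases "LAt P \<in># D")
    case True
    with ax show ?thesis by (blast intro: lder.ax)
  next
    case False
    with ax have "C = LAt P" by auto
    moreover from ax(1) obtain G' where "G = add_mset (LAt P) G'" by (blast dest: multi_member_split)
    ultimately show ?thesis using R lder_contract_atom[of rel m P G' D] by auto
  qed
next
  case bot
  then show ?thesis by (blast intro: lder.bot)
next
  case impL
  with R show ?thesis by (rule cut_left_impL)
next
  case (impR n' X Y D0)
  show ?thesis
  proof (cases "C = LImp X Y")
    case True
    with L R show ?thesis by (intro cut_right) auto
  next
    case False
    from R False impR show ?thesis by (rule cut_left_impR)
  qed
next
  case (boxL n' X l G0)
  from lder_weakenL[OF R, of X] have "lder rel m (add_mset C (add_mset X G)) D"
    by (simp add: add_mset_commute)
  with boxL obtain k where "lder rel k (add_mset X (add_mset (LBox l X) G0)) D"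
    using cut_lower[of n' m] by fastforce
  from lder.boxL[OF this] boxL(2) show ?thesis by blast
next
  case (boxR n' B X l G0 D0)
  show ?thesis
  proof (cases "C = LBox l X")
    case True
    have "boxR_last rel n G l X" unfolding boxR_last_def using boxR by blast
    with L R True show ?thesis by (intro cut_right) auto
  next
    case False
    with boxR(3) obtain K where "D = add_mset (LBox l X) K" by (auto simp: add_eq_conv_ex)
    with lder.boxR[OF boxR(4-6), of G0 K] boxR(2) show ?thesis by blast
  qed
qed

end

theorem lder_cut:
  assumes "transp rel" and "lder rel n G (add_mset C D)" and "lder rel m (add_mset C G) D"
  shows "lprov rel G D"
  using assms(2,3)
proof (induction C arbitrary: n m G D rule: measure_induct_rule[of size])
  case (less C)
  note cut_smaller = less.IH
  from less.prems show ?case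
  proof (induction "n + m" arbitrary: n m G D rule: less_induct)
    case less
    interpret cut_induction rel C n m
      using assms(1) cut_smaller less.hyps by unfold_locales blast+
    from less.prems show ?case by (rule cut_left)
  qed
qed

section \<open>Labelled proof trees\<close>

lemma length_ins [simp]: "length (ins j x xs) = Suc (length xs)"
  by (simp add: ins_def)

lemma length_del [simp]: "i < length xs \<Longrightarrow> length (del i xs) = length xs - 1"
  by (simp add: del_def)

lemma nth_ins: "j \<le> length xs \<Longrightarrow> p < Suc (length xs) \<Longrightarrow>
    ins j x xs ! p = (if p = j then x else xs ! unins j p)"
  by (auto simp: ins_def unins_def nth_append min_def)

lemma nth_ins_same [simp]: "j \<le> length xs \<Longrightarrow> ins j x xs ! j = x"
  by (simp add: nth_ins)

lemma nth_ins_other [simp]: "j \<le> length xs \<Longrightarrow> p < Suc (length xs) \<Longrightarrow> p \<noteq> j \<Longrightarrow>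
    ins j x xs ! p = xs ! unins j p"
  by (simp add: nth_ins)

lemma nth_del [simp]: "i < length xs \<Longrightarrow> p < length xs - 1 \<Longrightarrow> del i xs ! p = xs ! undel i p"
  by (auto simp: del_def undel_def nth_append min_def)

lemma unins_less [simp]: "j \<le> n \<Longrightarrow> p < Suc n \<Longrightarrow> p \<noteq> j \<Longrightarrow> unins j p < n"
  by (auto simp: unins_def)

lemma unins_le_pred [simp]: "j \<le> n \<Longrightarrow> p < Suc n \<Longrightarrow> p \<noteq> j \<Longrightarrow> unins j p \<le> n - 1"
  by (auto simp: unins_def)

lemma nth_ins_unins [simp]: "i < length L \<Longrightarrow> j \<le> length L \<Longrightarrow> p \<noteq> j \<Longrightarrow> p < Suc (Suc (length L - 1))
    \<Longrightarrow> ins (unins j p) x (del i L) ! unins j p = x"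
  by (rule nth_ins_same) (auto simp: unins_def)

lemma undel_less [simp]: "i < n \<Longrightarrow> p < n - 1 \<Longrightarrow> undel i p < n"
  by (auto simp: undel_def)

lemma map_ins: "map f (ins j x xs) = ins j (f x) (map f xs)"
  by (simp add: ins_def take_map drop_map)

lemma map_del: "map f (del i xs) = del i (map f xs)"
  by (simp add: del_def take_map drop_map)

lemma mset_ins [simp]: "mset (ins j x xs) = add_mset x (mset xs)"
  by (metis ins_def mset_append mset.simps(2) append_take_drop_id union_mset_add_mset_right)

lemma mset_del: "i < length xs \<Longrightarrow> mset xs = add_mset (xs ! i) (mset (del i xs))"
  unfolding del_def by (metis id_take_nth_drop mset_append union_mset_add_mset_right mset.simps(2))

lemma mset_map_nth_subseteq:
  assumes "distinct ss" and "\<forall>s\<in>set ss. s < length xs"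
  shows "mset (map (nth xs) ss) \<subseteq># mset xs"
proof -
  have "mset ss \<subseteq># mset [0..<length xs]"
    using assms by (simp add: subseteq_mset_def count_mset distinct_count_atmost_1 count_list_0_iff)
  then have "image_mset (nth xs) (mset ss) \<subseteq># image_mset (nth xs) (mset [0..<length xs])"
    by (rule image_mset_subseteq_mono)
  then show ?thesis by (metis map_nth mset_map)
qed

lemma subseteq_mset_indices:
  "B \<subseteq># mset xs \<Longrightarrow> \<exists>ss. distinct ss \<and> (\<forall>s\<in>set ss. s < length xs) \<and> mset (map (nth xs) ss) = B"
proof (induction xs arbitrary: B)
  case Nil
  then show ?case by auto
next
  case (Cons x xs)
  from Cons.prems have "B - {#x#} \<subseteq># mset xs" by (simp add: subset_eq_diff_conv)
  from Cons.IH[OF this] obtain ss where ss: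
    "distinct ss" "\<forall>s\<in>set ss. s < length xs" "mset (map (nth xs) ss) = B - {#x#}"
    by blast
  show ?case
  proof (cases "x \<in># B")
    case True
    with ss show ?thesis by (intro exI[of _ "0 # map Suc ss"]) (auto simp: distinct_map comp_def)
  next
    case False
    with ss show ?thesis by (intro exI[of _ "map Suc ss"]) (auto simp: distinct_map comp_def)
  qed
qed

fun unlabel :: "('a, 'l) lfm \<Rightarrow> 'a fm" where
  "unlabel LBot = Bot"
| "unlabel (LAt a) = At a"
| "unlabel (LImp A B) = Imp (unlabel A) (unlabel B)"
| "unlabel (LBox l A) = Box (unlabel A)"

fun is_latom :: "('a, 'l) lfm \<Rightarrow> bool" where
  "is_latom (LAt _) = True"
| "is_latom _ = False"

lemma unlabel_eq_iff [simp]: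
  "unlabel x = Bot \<longleftrightarrow> x = LBot"
  "unlabel x = At a \<longleftrightarrow> x = LAt a"
  "unlabel x = Imp A0 B0 \<longleftrightarrow> (\<exists>A B. x = LImp A B \<and> unlabel A = A0 \<and> unlabel B = B0)"
  "unlabel x = Box A0 \<longleftrightarrow> (\<exists>l A. x = LBox l A \<and> unlabel A = A0)"
  by (cases x; auto)+

lemma is_atom_unlabel [simp]: "is_atom (unlabel x) = is_latom x"
  by (cases x) auto

lemma is_box_unlabel [simp]: "is_box (unlabel x) = is_lbox x"
  by (cases x) auto

type_synonym ('a, 'l) lseq = "('a, 'l) lfm list \<times> ('a, 'l) lfm list"

definition unlabel_seq :: "('a, 'l) lseq \<Rightarrow> 'a seq" where
  "unlabel_seq s = (map unlabel (fst s), map unlabel (snd s))"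

text \<open>The rules of \<open>step_ok\<close> on labelled sequents; a cut names only the unlabelled cut formula.\<close>

fun lstep_ok :: "'a rule \<Rightarrow> ('a, 'l) lseq \<Rightarrow> ('a, 'l) lseq list \<Rightarrow> bool" where
  "lstep_ok (Ax i j) (L, R) ps =
     (ps = [] \<and> i < length L \<and> j < length R \<and> L ! i = R ! j \<and> is_latom (L ! i))"
| "lstep_ok (BotL i) (L, R) ps = (ps = [] \<and> i < length L \<and> L ! i = LBot)"
| "lstep_ok (ImpL i j k) (L, R) ps =
     (i < length L \<and> j \<le> length R \<and> k < length L \<and>
      (\<exists>A B. L ! i = LImp A B \<and> ps = [(del i L, ins j A R), (ins k B (del i L), R)]))"
| "lstep_ok (ImpR i j k) (L, R) ps =
     (i < length R \<and> j \<le> length L \<and> k < length R \<and>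
      (\<exists>A B. R ! i = LImp A B \<and> ps = [(ins j A L, ins k B (del i R))]))"
| "lstep_ok (BoxL i j k) (L, R) ps =
     (i < length L \<and> k < length L \<and> j \<le> length L \<and>
      (\<exists>l A. L ! i = LBox l A \<and> ps = [(ins j A (ins k (LBox l A) (del i L)), R)]))"
| "lstep_ok (BoxR ss i) (L, R) ps =
     (i < length R \<and> distinct ss \<and> (\<forall>s\<in>set ss. s < length L \<and> is_lbox (L ! s)) \<and>
      (\<exists>l A. R ! i = LBox l A \<and> ps = [(map (nth L) ss, [A])]))"
| "lstep_ok (Cut A j k) (L, R) ps =
     (j \<le> length R \<and> k \<le> length L \<and>
      (\<exists>A'. unlabel A' = A \<and> ps = [(L, ins j A' R), (ins k A' L, R)]))"

definition box_labels_ok :: "('l \<Rightarrow> 'l \<Rightarrow> bool) \<Rightarrow> 'a rule \<Rightarrow> ('a, 'l) lseq \<Rightarrow> ('a, 'l) lseq list \<Rightarrow> bool" where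
  "box_labels_ok rel r s ps \<longleftrightarrow> (\<forall>ss i l A. r = BoxR ss i \<longrightarrow> snd s ! i = LBox l A \<longrightarrow>
     (\<forall>x \<in> set (fst (ps ! 0)) \<union> set (snd (ps ! 0)). \<forall>k\<in>labels x. rel k l))"

datatype ('a, 'l) ltree = LNode "'a rule" "('a, 'l) lseq" "('a, 'l) ltree list"

fun lconcl :: "('a, 'l) ltree \<Rightarrow> ('a, 'l) lseq" where
  "lconcl (LNode r s ts) = s"

fun lvalid :: "('l \<Rightarrow> 'l \<Rightarrow> bool) \<Rightarrow> ('a, 'l) ltree \<Rightarrow> bool" where
  "lvalid rel (LNode r s ts) \<longleftrightarrow> \<not> is_cut r \<and> lstep_ok r s (map lconcl ts) \<and>
     box_labels_ok rel r s (map lconcl ts) \<and> list_all (lvalid rel) ts"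

fun erase :: "('a, 'l) ltree \<Rightarrow> 'a ptree" where
  "erase (LNode r s ts) = Node r (unlabel_seq s) (map erase ts)"

lemma concl_erase [simp]: "concl (erase t) = unlabel_seq (lconcl t)"
  by (cases t) simp

lemma step_ok_unlabel: "lstep_ok r s ps \<Longrightarrow> step_ok r (unlabel_seq s) (map unlabel_seq ps)"
  by (cases s, cases r) (auto simp: unlabel_seq_def map_ins map_del)

lemma valid_erase: "lvalid rel t \<Longrightarrow> valid False (erase t)"
proof (induction t)
  case (LNode r s ts)
  then have "step_ok r (unlabel_seq s) (map unlabel_seq (map lconcl ts))"
    by (intro step_ok_unlabel) simp
  with LNode show ?case by (auto simp: list_all_iff comp_def)
qed

lemma lder_lstep:
  assumes step: "lstep_ok r s ps" and "\<not> is_cut r" and box: "box_labels_ok rel r s ps"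
    and prems: "\<forall>p\<in>set ps. lprov rel (mset (fst p)) (mset (snd p))"
  shows "lprov rel (mset (fst s)) (mset (snd s))"
proof -
  obtain L R where s: "s = (L, R)" by (cases s)
  show ?thesis
  proof (cases r)
    case (Ax i j)
    with step s obtain a where "i < length L" "j < length R" "L ! i = LAt a" "R ! j = LAt a"
      by (cases "L ! i") auto
    then have "lder rel 0 (mset L) (mset R)" by (metis lder.ax nth_mem set_mset_mset)
    with s show ?thesis by auto
  next
    case (BotL i)
    with step s have "LBot \<in># mset L" by (auto simp: in_set_conv_nth)
    then have "lder rel 0 (mset L) (mset R)" by (rule lder.bot)
    with s show ?thesis by auto
  next
    case (ImpL i j k)
    with step s obtain A B where h: "i < length L" "L ! i = LImp A B"
      "ps = [(del i L, ins j A R), (ins k B (del i L), R)]" by auto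
    with prems obtain n1 n2 where "lder rel n1 (mset (del i L)) (add_mset A (mset R))"
      "lder rel n2 (add_mset B (mset (del i L))) (mset R)" by auto
    then obtain n where "lder rel n (mset (del i L)) (add_mset A (mset R))"
      "lder rel n (add_mset B (mset (del i L))) (mset R)" by (rule lder_common_height)
    from lder.impL[OF this] mset_del[OF h(1)] h(2) s show ?thesis by auto
  next
    case (ImpR i j k)
    with step s obtain A B where h: "i < length R" "R ! i = LImp A B"
      "ps = [(ins j A L, ins k B (del i R))]" by auto
    with prems obtain n where "lder rel n (add_mset A (mset L)) (add_mset B (mset (del i R)))" by auto
    from lder.impR[OF this] mset_del[OF h(1)] h(2) s show ?thesis by auto
  next
    case (BoxL i j k)
    with step s obtain l A where h: "i < length L" "L ! i = LBox l A"
      "ps = [(ins j A (ins k (LBox l A) (del i L)), R)]" by auto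
    with prems obtain n where "lder rel n (add_mset A (add_mset (LBox l A) (mset (del i L)))) (mset R)"
      by auto
    from lder.boxL[OF this] mset_del[OF h(1)] h(2) s show ?thesis by auto
  next
    case (BoxR ss i)
    with step s obtain l A where h: "i < length R" "distinct ss" "\<forall>s\<in>set ss. s < length L \<and> is_lbox (L ! s)"
      "R ! i = LBox l A" "ps = [(map (nth L) ss, [A])]" by auto
    let ?B = "mset (map (nth L) ss)"
    from prems h(5) obtain n where "lder rel n ?B {#A#}" by auto
    moreover have "\<forall>x\<in>#?B. is_lbox x" using h(3) by auto
    moreover have "\<forall>x\<in>#add_mset A ?B. \<forall>k\<in>labels x. rel k l"
      using box BoxR h(4,5) s by (simp add: box_labels_ok_def)
    ultimately have "lder rel (Suc n) (mset L - ?B + ?B) (add_mset (LBox l A) (mset (del i R)))"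
      by (rule lder.boxR)
    moreover have "?B \<subseteq># mset L" using mset_map_nth_subseteq h(2,3) by blast
    ultimately show ?thesis using mset_del[OF h(1)] h(4) s by (auto simp: subset_mset.diff_add)
  next
    case Cut
    with \<open>\<not> is_cut r\<close> show ?thesis by simp
  qed
qed

lemma lvalid_of_lder:
  "lder rel n M N \<Longrightarrow> mset L = M \<Longrightarrow> mset R = N \<Longrightarrow> \<exists>t. lvalid rel t \<and> lconcl t = (L, R)"
proof (induction arbitrary: L R rule: lder.induct)
  case (ax P G D n)
  then obtain i j where "i < length L" "L ! i = LAt P" "j < length R" "R ! j = LAt P"
    by (metis in_set_conv_nth set_mset_mset)
  then have "lvalid rel (LNode (Ax i j) (L, R) [])" by (simp add: box_labels_ok_def)
  then show ?case by fastforce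
next
  case (bot G n D)
  then obtain i where "i < length L" "L ! i = LBot" by (metis in_set_conv_nth set_mset_mset)
  then have "lvalid rel (LNode (BotL i) (L, R) [])" by (simp add: box_labels_ok_def)
  then show ?case by fastforce
next
  case (impL n G A D B)
  then obtain i where i: "i < length L" "L ! i = LImp A B"
    by (metis in_set_conv_nth set_mset_mset union_single_eq_member)
  with impL.prems mset_del[OF i(1)] have G: "mset (del i L) = G" by simp
  with impL obtain t1 t2 where "lvalid rel t1" "lconcl t1 = (del i L, ins 0 A R)"
    "lvalid rel t2" "lconcl t2 = (ins 0 B (del i L), R)" by (metis mset_ins)
  with i have "lvalid rel (LNode (ImpL i 0 0) (L, R) [t1, t2])" by (auto simp: box_labels_ok_def)
  then show ?case by fastforce
next
  case (impR n A G B D)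
  then obtain i where i: "i < length R" "R ! i = LImp A B"
    by (metis in_set_conv_nth set_mset_mset union_single_eq_member)
  with impR.prems mset_del[OF i(1)] have D: "mset (del i R) = D" by simp
  with impR obtain t where "lvalid rel t" "lconcl t = (ins 0 A L, ins 0 B (del i R))"
    by (metis mset_ins)
  with i have "lvalid rel (LNode (ImpR i 0 0) (L, R) [t])" by (auto simp: box_labels_ok_def)
  then show ?case by fastforce
next
  case (boxL n A l G D)
  then obtain i where i: "i < length L" "L ! i = LBox l A"
    by (metis in_set_conv_nth set_mset_mset union_single_eq_member)
  with boxL.prems mset_del[OF i(1)] have G: "mset (del i L) = G" by simp
  with boxL obtain t where "lvalid rel t" "lconcl t = (ins 0 A (ins 0 (LBox l A) (del i L)), R)"
    by (metis mset_ins)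
  with i have "lvalid rel (LNode (BoxL i 0 0) (L, R) [t])" by (auto simp: box_labels_ok_def)
  then show ?case by fastforce
next
  case (boxR n B A l G D)
  then obtain i where i: "i < length R" "R ! i = LBox l A"
    by (metis in_set_conv_nth set_mset_mset union_single_eq_member)
  from boxR.prems have "B \<subseteq># mset L" by simp
  then obtain ss where ss: "distinct ss" "\<forall>s\<in>set ss. s < length L" "mset (map (nth L) ss) = B"
    using subseteq_mset_indices by blast
  with boxR.IH[of "map (nth L) ss" "[A]"] obtain t where "lvalid rel t" "lconcl t = (map (nth L) ss, [A])"
    by auto
  moreover have "\<forall>s\<in>set ss. is_lbox (L ! s)"
    using boxR.hyps(2) ss(3) by (metis image_eqI list.set_map set_mset_mset)
  moreover have "\<forall>x \<in> set (map (nth L) ss) \<union> set [A]. \<forall>k\<in>labels x. rel k l"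
    using boxR.hyps(3) ss(3) by (metis Un_iff empty_iff insert_iff list.set(1,2) set_mset_add_mset_insert set_mset_mset)
  ultimately have "lvalid rel (LNode (BoxR ss i) (L, R) [t])"
    using i ss by (auto simp: box_labels_ok_def)
  then show ?case by fastforce
qed

section \<open>Correspondence in labelled proofs\<close>

fun lsubfm :: "('a, 'l) lfm \<Rightarrow> nat list \<Rightarrow> ('a, 'l) lfm option" where
  "lsubfm A [] = Some A"
| "lsubfm (LImp A B) (n # q) = (if n = 0 then lsubfm A q else if n = 1 then lsubfm B q else None)"
| "lsubfm (LBox l A) (n # q) = (if n = 0 then lsubfm A q else None)"
| "lsubfm _ _ = None"

definition seq_side :: "bool \<Rightarrow> 'f list \<times> 'f list \<Rightarrow> 'f list" where
  "seq_side side s = (if side then snd s else fst s)"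

text \<open>The
  subformula function is a parameter so that plain and labelled formulas are both covered.\<close>

definition up_consistent :: "('f \<Rightarrow> nat list \<Rightarrow> 'f option) \<Rightarrow> 'a rule \<Rightarrow> 'f list \<times> 'f list
    \<Rightarrow> ('f list \<times> 'f list) list \<Rightarrow> bool" where
  "up_consistent sub r s ps \<longleftrightarrow>
    (\<forall>c side p side' p' pre. c < length ps \<longrightarrow> p < length (seq_side side (ps ! c)) \<longrightarrow>
       up r c side p = Some (side', p', pre) \<longrightarrow>
       p' < length (seq_side side' s) \<and> sub (seq_side side' s ! p') pre = Some (seq_side side (ps ! c) ! p)) \<and>
    (\<forall>A j k. r = Cut A j k \<longrightarrow> length ps = 2 \<longrightarrow>
       j < length (snd (ps ! 0)) \<and> k < length (fst (ps ! 1)) \<and> snd (ps ! 0) ! j = fst (ps ! 1) ! k)"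

lemma up_consistentD:
  assumes "up_consistent sub r s ps" and "c < length ps" and "p < length (seq_side side (ps ! c))"
    and "up r c side p = Some (side', p', pre)"
  shows "p' < length (seq_side side' s)" and "sub (seq_side side' s ! p') pre = Some (seq_side side (ps ! c) ! p)"
  using assms unfolding up_consistent_def by blast+

lemma step_ok_up_consistent: "step_ok r s ps \<Longrightarrow> up_consistent subfm r s ps"
  by (cases s, cases r) (auto simp: up_consistent_def seq_side_def nth_Cons' nth_ins split: if_splits)

lemma lstep_ok_up_consistent: "lstep_ok r s ps \<Longrightarrow> up_consistent lsubfm r s ps"
  by (cases s, cases r) (auto simp: up_consistent_def seq_side_def nth_Cons' nth_ins split: if_splits)

lemma up_consistent_unique:
  assumes cons: "up_consistent sub r s ps" "up_consistent sub r s ps'"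
    and len: "length ps = length ps'"
    and lens: "\<And>c side. c < length ps \<Longrightarrow> length (seq_side side (ps ! c)) = length (seq_side side (ps' ! c))"
    and none: "\<And>c side p. c < length ps \<Longrightarrow> p < length (seq_side side (ps ! c)) \<Longrightarrow> up r c side p = None \<Longrightarrow>
        seq_side side (ps ! c) ! p = seq_side side (ps' ! c) ! p"
  shows "ps = ps'"
proof (rule nth_equalityI[OF len])
  fix c assume c: "c < length ps"
  have side_eq: "seq_side side (ps ! c) = seq_side side (ps' ! c)" for side
  proof (rule nth_equalityI)
    show "length (seq_side side (ps ! c)) = length (seq_side side (ps' ! c))" using lens[OF c] .
    fix p assume p: "p < length (seq_side side (ps ! c))"
    show "seq_side side (ps ! c) ! p = seq_side side (ps' ! c) ! p"
    proof (cases "up r c side p")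
      case None
      with none c p show ?thesis by blast
    next
      case (Some t)
      then obtain side' p' pre where t: "up r c side p = Some (side', p', pre)" by (cases t) auto
      from up_consistentD(2)[OF cons(1) c p t] up_consistentD(2)[OF cons(2) _ _ t] c p len lens[OF c]
      show ?thesis by simp
    qed
  qed
  from side_eq[of True] side_eq[of False] show "ps ! c = ps' ! c" by (simp add: seq_side_def prod_eq_iff)
qed

lemma lstep_ok_transfer:
  assumes step: "lstep_ok r s ps0" and cons: "up_consistent lsubfm r s ps"
    and unl: "map unlabel_seq ps = map unlabel_seq ps0"
    and none: "\<And>c side p. c < length ps0 \<Longrightarrow> p < length (seq_side side (ps0 ! c)) \<Longrightarrow>
      up r c side p = None \<Longrightarrow> seq_side side (ps ! c) ! p = seq_side side (ps0 ! c) ! p"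
  shows "lstep_ok r s ps"
proof -
  from unl have len: "length ps = length ps0" by (metis length_map)
  have lens: "length (seq_side side (ps ! c)) = length (seq_side side (ps0 ! c))" if "c < length ps" for c side
    using arg_cong[OF unl, of "\<lambda>xs. xs ! c"] that len
    by (cases side) (auto simp: unlabel_seq_def seq_side_def dest: map_eq_imp_length_eq)
  have "ps = ps0"
    using up_consistent_unique[OF cons lstep_ok_up_consistent[OF step] len lens] none len lens by auto
  with step show ?thesis by simp
qed

lemma lstep_ok_if_unlabel:
  assumes step: "step_ok r (unlabel_seq s) (map unlabel_seq ps)" and cons: "up_consistent lsubfm r s ps"
  shows "lstep_ok r s ps"
proof -
  obtain L R where s: "s = (L, R)" by (cases s)
  show ?thesis
  proof (cases r)
    case (Ax i j)
    with step show ?thesis by (cases "L ! i"; cases "R ! j") (auto simp: s unlabel_seq_def)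
  next
    case (BotL i)
    with step show ?thesis by (auto simp: s unlabel_seq_def)
  next
    case (ImpL i j k)
    with step obtain A B where h: "i < length L" "j \<le> length R" "k < length L" "L ! i = LImp A B"
      "map unlabel_seq ps = map unlabel_seq [(del i L, ins j A R), (ins k B (del i L), R)]"
      by (auto simp: s unlabel_seq_def map_ins map_del)
    show ?thesis
      by (rule lstep_ok_transfer[OF _ cons h(5)]) (use h ImpL s in \<open>auto simp: seq_side_def nth_Cons' split: if_splits\<close>)
  next
    case (ImpR i j k)
    with step obtain A B where h: "i < length R" "j \<le> length L" "k < length R" "R ! i = LImp A B"
      "map unlabel_seq ps = map unlabel_seq [(ins j A L, ins k B (del i R))]"
      by (auto simp: s unlabel_seq_def map_ins map_del)
    show ?thesis
      by (rule lstep_ok_transfer[OF _ cons h(5)]) (use h ImpR s in \<open>auto simp: seq_side_def split: if_splits\<close>)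
  next
    case (BoxL i j k)
    with step obtain l A where h: "i < length L" "k < length L" "j \<le> length L" "L ! i = LBox l A"
      "map unlabel_seq ps = map unlabel_seq [(ins j A (ins k (LBox l A) (del i L)), R)]"
      by (auto simp: s unlabel_seq_def map_ins map_del)
    show ?thesis
      by (rule lstep_ok_transfer[OF _ cons h(5)]) (use h BoxL s in \<open>auto simp: seq_side_def split: if_splits\<close>)
  next
    case (BoxR ss i)
    with step have h0: "i < length R" "distinct ss" "\<forall>s\<in>set ss. s < length L \<and> is_lbox (L ! s)"
      by (auto simp: s unlabel_seq_def)
    with step BoxR obtain l A where h: "R ! i = LBox l A"
      "map unlabel_seq ps = map unlabel_seq [(map (nth L) ss, [A])]"
      by (auto simp: s unlabel_seq_def)
    show ?thesis
      by (rule lstep_ok_transfer[OF _ cons h(2)]) (use h0 h BoxR s in \<open>auto simp: seq_side_def split: if_splits\<close>)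
  next
    case (Cut A j k)
    with step obtain p0 p1 where ps: "ps = [p0, p1]" "j \<le> length R" "k \<le> length L"
      "map unlabel (fst p0) = map unlabel L" "map unlabel (snd p0) = ins j A (map unlabel R)"
      "map unlabel (fst p1) = ins k A (map unlabel L)" "map unlabel (snd p1) = map unlabel R"
      by (auto simp: s unlabel_seq_def length_Suc_conv numeral_2_eq_2)
    define A' where "A' = snd p0 ! j"
    have "j < length (snd p0)" using ps(2,5) by (metis length_map length_ins less_Suc_eq_le)
    then have "unlabel A' = A" using ps(2,5) unfolding A'_def by (metis nth_map nth_ins_same length_map)
    then have ps0: "lstep_ok r s [(L, ins j A' R), (ins k A' L, R)]" using ps Cut s by auto
    from cons Cut ps have "snd p0 ! j = fst p1 ! k" by (auto simp: up_consistent_def)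
    with ps Cut s \<open>unlabel A' = A\<close> show ?thesis
      by (intro lstep_ok_transfer[OF ps0 cons])
         (auto simp: A'_def unlabel_seq_def map_ins seq_side_def nth_Cons' split: if_splits)
  qed
qed

section \<open>Erased labelled proofs are prehistoric-cycle-free\<close>

lemma subfm_append: "subfm X (p @ q) = (case subfm X p of None \<Rightarrow> None | Some Y \<Rightarrow> subfm Y q)"
  by (induction X p rule: subfm.induct) auto

lemma lsubfm_append: "lsubfm X (p @ q) = (case lsubfm X p of None \<Rightarrow> None | Some Y \<Rightarrow> lsubfm Y q)"
  by (induction X p rule: lsubfm.induct) auto

lemma subfm_unlabel: "subfm (unlabel X) q = map_option unlabel (lsubfm X q)"
  by (induction X q rule: lsubfm.induct) auto

lemma labels_lsubfm: "lsubfm X q = Some (LBox l Y) \<Longrightarrow> l \<in> labels X"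
  by (induction X q rule: lsubfm.induct) (auto split: if_splits)

fun lsubtree :: "('a, 'l) ltree \<Rightarrow> nat list \<Rightarrow> ('a, 'l) ltree option" where
  "lsubtree t [] = Some t"
| "lsubtree (LNode r s ts) (c # a) = (if c < length ts then lsubtree (ts ! c) a else None)"

lemma subtree_append: "subtree T (a @ b) = (case subtree T a of None \<Rightarrow> None | Some u \<Rightarrow> subtree u b)"
  by (induction T a rule: subtree.induct) auto

lemma lsubtree_append: "lsubtree t (a @ b) = (case lsubtree t a of None \<Rightarrow> None | Some u \<Rightarrow> lsubtree u b)"
  by (induction t a rule: lsubtree.induct) auto

lemma subtree_erase: "subtree (erase t) a = map_option erase (lsubtree t a)"
  by (induction t a rule: lsubtree.induct) auto

lemma valid_subtree: "valid b T \<Longrightarrow> subtree T a = Some u \<Longrightarrow> valid b u"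
  by (induction T a rule: subtree.induct) (auto simp: list_all_length split: if_splits)

lemma lvalid_lsubtree: "lvalid rel t \<Longrightarrow> lsubtree t a = Some u \<Longrightarrow> lvalid rel u"
  by (induction t a rule: lsubtree.induct) (auto simp: list_all_length split: if_splits)

lemma fm_at_simp: "fm_at T (a, side, p, q) = (case subtree T a of None \<Rightarrow> None
   | Some u \<Rightarrow> if p < length (seq_side side (concl u)) then subfm (seq_side side (concl u) ! p) q else None)"
  by (simp add: fm_at_def seq_fm_def seq_side_def split: option.splits)

definition lfm_at :: "('a, 'l) ltree \<Rightarrow> occ \<Rightarrow> ('a, 'l) lfm option" where
  "lfm_at t oc = (case oc of (a, side, p, q) \<Rightarrow>
     (case lsubtree t a of None \<Rightarrow> None
      | Some u \<Rightarrow> if p < length (seq_side side (lconcl u)) then lsubfm (seq_side side (lconcl u) ! p) q else None))"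

lemma fm_at_erase: "fm_at (erase t) oc = map_option unlabel (lfm_at t oc)"
  by (cases oc) (auto simp: fm_at_def lfm_at_def subtree_erase seq_fm_def seq_side_def unlabel_seq_def
      subfm_unlabel split: option.splits)

text \<open>Corresponding occurrences carry the same labelled formula, so each family of an erased
  labelled proof carries a single label.\<close>

lemma lfm_at_dcorr:
  assumes t: "lvalid rel t" and d: "dcorr (erase t) o1 o2"
  shows "lfm_at t o1 = lfm_at t o2"
proof -
  from d consider (up) a c side p q r s cs side' p' pre where
      "subtree (erase t) a = Some (Node r s cs)" "c < length cs"
      "o1 = (a @ [c], side, p, q)" "up r c side p = Some (side', p', pre)" "o2 = (a, side', p', pre @ q)"
    | (cut) a A j k s cs where "subtree (erase t) a = Some (Node (Cut A j k) s cs)"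
    unfolding dcorr_def by blast
  then show ?thesis
  proof cases
    case up
    then obtain s' ts where u: "lsubtree t a = Some (LNode r s' ts)" "cs = map erase ts"
      by (auto simp: subtree_erase elim!: erase.elims)
    with t have "lstep_ok r s' (map lconcl ts)" using lvalid_lsubtree by fastforce
    then have cons: "up_consistent lsubfm r s' (map lconcl ts)" by (rule lstep_ok_up_consistent)
    from u up(2) have c: "c < length ts" and st: "lsubtree t (a @ [c]) = Some (ts ! c)"
      by (simp_all add: lsubtree_append)
    from d have "lfm_at t o1 \<noteq> None" by (simp add: dcorr_def is_occ_def fm_at_erase)
    with up(3) st have p: "p < length (seq_side side (map lconcl ts ! c))"
      by (auto simp: lfm_at_def c split: if_splits)
    from up_consistentD[OF cons _ p up(4)] c have "p' < length (seq_side side' s')"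
      "lsubfm (seq_side side' s' ! p') pre = Some (seq_side side (lconcl (ts ! c)) ! p)" by simp_all
    with up(3,5) st u p c show ?thesis by (simp add: lfm_at_def lsubfm_append)
  next
    case cut
    with t show ?thesis
      by (auto simp: subtree_erase dest!: lvalid_lsubtree[OF t] elim!: erase.elims)
  qed
qed

lemma lfm_at_corr:
  assumes t: "lvalid rel t" and "corr (erase t) o1 o2"
  shows "lfm_at t o1 = lfm_at t o2"
  using assms(2) unfolding corr_def
  by (induction rule: rtranclp_induct) (auto dest: lfm_at_dcorr[OF t])

lemma tranclp_path:
  "R\<^sup>+\<^sup>+ x y \<Longrightarrow> \<exists>xs. xs \<noteq> [] \<and> xs ! 0 = x \<and> (\<forall>i. Suc i < length xs \<longrightarrow> R (xs ! i) (xs ! Suc i))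
     \<and> R (last xs) y"
proof (induction rule: tranclp_induct)
  case (base y)
  then show ?case by (intro exI[of _ "[x]"]) auto
next
  case (step y z)
  then obtain xs where xs: "xs \<noteq> []" "xs ! 0 = x" "\<forall>i. Suc i < length xs \<longrightarrow> R (xs ! i) (xs ! Suc i)"
    "R (last xs) y" by blast
  have "R ((xs @ [y]) ! i) ((xs @ [y]) ! Suc i)" if "Suc i < length (xs @ [y])" for i
  proof (cases "Suc i < length xs")
    case True
    with xs(3) show ?thesis by (simp add: nth_append)
  next
    case False
    with that have "i = length xs - 1" by simp
    with xs(1,4) show ?thesis by (simp add: nth_append last_conv_nth)
  qed
  with xs step(2) show ?case by (intro exI[of _ "xs @ [y]"]) (auto simp: nth_append)
qed

lemma cyclic_list_iff_tranclp:
  "(\<exists>xs. xs \<noteq> [] \<and> (\<forall>i<length xs. R (xs ! i) (xs ! ((i + 1) mod length xs)))) \<longleftrightarrow> (\<exists>x. R\<^sup>+\<^sup>+ x x)"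
proof
  assume "\<exists>xs. xs \<noteq> [] \<and> (\<forall>i<length xs. R (xs ! i) (xs ! ((i + 1) mod length xs)))"
  then obtain xs where xs: "xs \<noteq> []" "\<forall>i<length xs. R (xs ! i) (xs ! ((i + 1) mod length xs))" by blast
  have "R\<^sup>+\<^sup>+ (xs ! 0) (xs ! ((i + 1) mod length xs))" if "i < length xs" for i
    using that
  proof (induction i)
    case 0
    with xs(2) show ?case by auto
  next
    case (Suc i)
    with xs(2) have "R\<^sup>+\<^sup>+ (xs ! 0) (xs ! Suc i)" "R (xs ! Suc i) (xs ! ((Suc i + 1) mod length xs))"
      by auto
    then show ?case by simp
  qed
  from this[of "length xs - 1"] xs(1) show "\<exists>x. R\<^sup>+\<^sup>+ x x" by auto
next
  assume "\<exists>x. R\<^sup>+\<^sup>+ x x"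
  then obtain x xs where xs: "xs \<noteq> []" "xs ! 0 = x" "\<forall>i. Suc i < length xs \<longrightarrow> R (xs ! i) (xs ! Suc i)"
    "R (last xs) x" using tranclp_path by metis
  have "R (xs ! i) (xs ! ((i + 1) mod length xs))" if "i < length xs" for i
  proof (cases "Suc i < length xs")
    case True
    with xs(3) show ?thesis by simp
  next
    case False
    with that have "i = length xs - 1" by simp
    with xs(1,2,4) show ?thesis by (simp add: last_conv_nth)
  qed
  with xs(1) show "\<exists>xs. xs \<noteq> [] \<and> (\<forall>i<length xs. R (xs ! i) (xs ! ((i + 1) mod length xs)))" by blast
qed

lemma prehist_cycle_free_iff: "prehist_cycle_free T \<longleftrightarrow> (\<forall>F. \<not> (prehist T)\<^sup>+\<^sup>+ F F)"
  unfolding prehist_cycle_free_def cyclic_list_iff_tranclp by blast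

definition family_label :: "('a, 'l) ltree \<Rightarrow> occ set \<Rightarrow> 'l" where
  "family_label t F = (case lfm_at t (SOME oc. oc \<in> F) of Some (LBox l _) \<Rightarrow> l | _ \<Rightarrow> undefined)"

lemma family_label_eq:
  assumes t: "lvalid rel t" and F: "F \<in> families (erase t)" and oc: "oc \<in> F"
    and box: "lfm_at t oc = Some (LBox l X)"
  shows "family_label t F = l"
proof -
  from F obtain o0 where F_def: "F = family (erase t) o0" by (auto simp: families_def)
  have "(SOME x. x \<in> F) \<in> F" using oc by (rule someI)
  with oc have "corr (erase t) o0 (SOME x. x \<in> F)" "corr (erase t) o0 oc"
    unfolding F_def family_def by simp_all
  from lfm_at_corr[OF t this(1)] lfm_at_corr[OF t this(2)]
  have "lfm_at t (SOME x. x \<in> F) = lfm_at t oc" by simp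
  with box show ?thesis by (simp add: family_label_def)
qed

lemma prehist_erase_family_label:
  assumes t: "lvalid rel t" and pre: "prehist (erase t) F G"
  shows "rel (family_label t F) (family_label t G)"
proof -
  from pre obtain a ss i s cs oc where h: "F \<in> families (erase t)" "G \<in> families (erase t)"
    "subtree (erase t) a = Some (Node (BoxR ss i) s cs)" "(a, True, i, []) \<in> G"
    "box_occ (erase t) oc" "fst oc = a @ [0]" "oc \<in> F"
    unfolding prehist_def by blast
  from h(3) obtain L R ts where u: "lsubtree t a = Some (LNode (BoxR ss i) (L, R) ts)"
    by (auto simp: subtree_erase elim!: erase.elims)
  with t have tu: "lvalid rel (LNode (BoxR ss i) (L, R) ts)" by (rule lvalid_lsubtree)
  then obtain l A where lA: "i < length R" "R ! i = LBox l A" "map lconcl ts = [(map (nth L) ss, [A])]"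
    by auto
  with tu have below: "\<forall>x \<in> set (map (nth L) ss) \<union> set [A]. \<forall>k\<in>labels x. rel k l"
    by (simp add: box_labels_ok_def)
  have "family_label t G = l"
    using family_label_eq[OF t h(2,4)] u lA by (simp add: lfm_at_def seq_side_def)
  moreover obtain side p q where oc: "oc = (a @ [0], side, p, q)" using h(6) by (cases oc) auto
  from h(5) obtain k Y where lo: "lfm_at t oc = Some (LBox k Y)"
    by (auto simp: box_occ_def fm_at_erase)
  have "family_label t F = k" by (rule family_label_eq[OF t h(1,7) lo])
  moreover have "rel k l"
  proof -
    from lA(3) obtain t0 where t0: "ts = [t0]" "lconcl t0 = (map (nth L) ss, [A])" by auto
    with u have "lsubtree t (a @ [0]) = Some t0" by (simp add: lsubtree_append)
    with lo oc have "p < length (seq_side side (lconcl t0))"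
      "lsubfm (seq_side side (lconcl t0) ! p) q = Some (LBox k Y)"
      by (auto simp: lfm_at_def split: if_splits)
    with t0(2) below show ?thesis
      by (cases side) (auto simp: seq_side_def dest!: labels_lsubfm)
  qed
  ultimately show ?thesis by simp
qed

lemma prehist_cycle_free_erase:
  assumes t: "lvalid rel t" and "transp rel" and irrefl: "\<And>x. \<not> rel x x"
  shows "prehist_cycle_free (erase t)"
  unfolding prehist_cycle_free_iff
proof (intro allI notI)
  have labels_rise: "rel\<^sup>+\<^sup>+ (family_label t F) (family_label t G)" if "(prehist (erase t))\<^sup>+\<^sup>+ F G" for F G
    using that
  proof (induction rule: tranclp_induct)
    case (base G)
    from prehist_erase_family_label[OF t base] show ?case by (rule tranclp.r_into_trancl)
  next
    case (step G H)
    with prehist_erase_family_label[OF t step(2)] show ?case by simp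
  qed
  fix F assume "(prehist (erase t))\<^sup>+\<^sup>+ F F"
  then have "rel\<^sup>+\<^sup>+ (family_label t F) (family_label t F)" by (rule labels_rise)
  with \<open>transp rel\<close> irrefl show False by (simp add: tranclp_ident_if_transp)
qed

section \<open>Labelling a proof by its families\<close>

fun label_fm :: "(nat list \<Rightarrow> 'l) \<Rightarrow> 'a fm \<Rightarrow> ('a, 'l) lfm" where
  "label_fm f Bot = LBot"
| "label_fm f (At a) = LAt a"
| "label_fm f (Imp A B) = LImp (label_fm (\<lambda>q. f (0 # q)) A) (label_fm (\<lambda>q. f (1 # q)) B)"
| "label_fm f (Box A) = LBox (f []) (label_fm (\<lambda>q. f (0 # q)) A)"

lemma unlabel_label_fm [simp]: "unlabel (label_fm f X) = X"
  by (induction X arbitrary: f) auto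

lemma lsubfm_label_fm: "lsubfm (label_fm f X) q = map_option (label_fm (\<lambda>q'. f (q @ q'))) (subfm X q)"
  by (induction X q arbitrary: f rule: subfm.induct) auto

lemma label_fm_cong:
  "(\<And>q B. subfm X q = Some (Box B) \<Longrightarrow> f q = g q) \<Longrightarrow> label_fm f X = label_fm g X"
proof (induction X arbitrary: f g)
  case (Imp A B)
  have "label_fm (\<lambda>q. f (0 # q)) A = label_fm (\<lambda>q. g (0 # q)) A" using Imp.prems by (intro Imp.IH(1)) auto
  moreover have "label_fm (\<lambda>q. f (1 # q)) B = label_fm (\<lambda>q. g (1 # q)) B" using Imp.prems by (intro Imp.IH(2)) auto
  ultimately show ?case by simp
next
  case (Box A)
  have "label_fm (\<lambda>q. f (0 # q)) A = label_fm (\<lambda>q. g (0 # q)) A" using Box.prems by (intro Box.IH) auto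
  moreover have "f [] = g []" using Box.prems[of "[]" A] by simp
  ultimately show ?case by simp
qed auto

lemma labels_label_fm: "k \<in> labels (label_fm f X) \<Longrightarrow> \<exists>q B. subfm X q = Some (Box B) \<and> k = f q"
proof (induction X arbitrary: f)
  case (Imp A B)
  then consider "k \<in> labels (label_fm (\<lambda>q. f (0 # q)) A)" | "k \<in> labels (label_fm (\<lambda>q. f (1 # q)) B)"
    by auto
  then show ?case
  proof cases
    case 1
    from Imp.IH(1)[OF 1] obtain q C where "subfm A q = Some (Box C)" "k = f (0 # q)" by blast
    then show ?thesis by (intro exI[of _ "0 # q"]) auto
  next
    case 2
    from Imp.IH(2)[OF 2] obtain q C where "subfm B q = Some (Box C)" "k = f (1 # q)" by blast
    then show ?thesis by (intro exI[of _ "1 # q"]) auto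
  qed
next
  case (Box A)
  then consider "k = f []" | "k \<in> labels (label_fm (\<lambda>q. f (0 # q)) A)" by auto
  then show ?case
  proof cases
    case 1
    then show ?thesis by (intro exI[of _ "[]"]) auto
  next
    case 2
    from Box.IH[OF 2] obtain q C where "subfm A q = Some (Box C)" "k = f (0 # q)" by blast
    then show ?thesis by (intro exI[of _ "0 # q"]) auto
  qed
qed auto

lemma corr_sym: "corr T o1 o2 \<Longrightarrow> corr T o2 o1"
  unfolding corr_def
proof (induction rule: rtranclp_induct)
  case (step y z)
  then show ?case by (metis (mono_tags, lifting) converse_rtranclp_into_rtranclp)
qed simp

lemma family_corr:
  assumes "corr T o1 o2"
  shows "family T o1 = family T o2"
proof -
  have "corr T o1 o' \<longleftrightarrow> corr T o2 o'" for o'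
    using assms corr_sym[OF assms] unfolding corr_def by (meson rtranclp_trans)
  then show ?thesis unfolding family_def by auto
qed

lemma family_dcorr: "dcorr T o1 o2 \<Longrightarrow> family T o1 = family T o2"
  by (rule family_corr) (simp add: corr_def r_into_rtranclp)

definition family_labels :: "'a ptree \<Rightarrow> nat list \<Rightarrow> bool \<Rightarrow> 'a fm list \<Rightarrow> ('a, occ set) lfm list" where
  "family_labels T a side xs = map (\<lambda>p. label_fm (\<lambda>q. family T (a, side, p, q)) (xs ! p)) [0..<length xs]"

definition family_lseq :: "'a ptree \<Rightarrow> nat list \<Rightarrow> 'a seq \<Rightarrow> ('a, occ set) lseq" where
  "family_lseq T a s = (family_labels T a False (fst s), family_labels T a True (snd s))"

definition family_lpremises :: "'a ptree \<Rightarrow> nat list \<Rightarrow> 'a ptree list \<Rightarrow> ('a, occ set) lseq list" where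
  "family_lpremises T a ts = map (\<lambda>c. family_lseq T (a @ [c]) (concl (ts ! c))) [0..<length ts]"

lemma length_family_labels [simp]: "length (family_labels T a side xs) = length xs"
  by (simp add: family_labels_def)

lemma nth_family_labels [simp]:
  "p < length xs \<Longrightarrow> family_labels T a side xs ! p = label_fm (\<lambda>q. family T (a, side, p, q)) (xs ! p)"
  by (simp add: family_labels_def)

lemma seq_side_family_lseq [simp]:
  "seq_side side (family_lseq T a s) = family_labels T a side (seq_side side s)"
  by (simp add: family_lseq_def seq_side_def)

lemma unlabel_family_labels [simp]: "map unlabel (family_labels T a side xs) = xs"
  by (simp add: family_labels_def comp_def map_nth)

lemma unlabel_family_lseq [simp]: "unlabel_seq (family_lseq T a s) = s"
  by (simp add: unlabel_seq_def family_lseq_def)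

lemma unlabel_family_lpremises [simp]: "map unlabel_seq (family_lpremises T a ts) = map concl ts"
  by (rule nth_equalityI) (simp_all add: family_lpremises_def)

lemma family_label_fm_up:
  assumes T: "valid b T" and st: "subtree T a = Some (Node r s cs)"
    and c: "c < length cs" and p: "p < length (seq_side side (concl (cs ! c)))"
    and u: "up r c side p = Some (side', p', pre)"
  shows "p' < length (seq_side side' s)"
    and "subfm (seq_side side' s ! p') pre = Some (seq_side side (concl (cs ! c)) ! p)"
    and "label_fm (\<lambda>q. family T (a, side', p', pre @ q)) (seq_side side (concl (cs ! c)) ! p)
      = label_fm (\<lambda>q. family T (a @ [c], side, p, q)) (seq_side side (concl (cs ! c)) ! p)"
proof -
  from valid_subtree[OF T st] have "step_ok r s (map concl cs)" by simp
  then have cons: "up_consistent subfm r s (map concl cs)" by (rule step_ok_up_consistent)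
  from c p have "p < length (seq_side side (map concl cs ! c))" by simp
  from up_consistentD[OF cons _ this u] c
  show pos: "p' < length (seq_side side' s)"
    and sub: "subfm (seq_side side' s ! p') pre = Some (seq_side side (concl (cs ! c)) ! p)" by simp_all
  show "label_fm (\<lambda>q. family T (a, side', p', pre @ q)) (seq_side side (concl (cs ! c)) ! p)
    = label_fm (\<lambda>q. family T (a @ [c], side, p, q)) (seq_side side (concl (cs ! c)) ! p)"
  proof (rule label_fm_cong)
    fix q B assume qB: "subfm (seq_side side (concl (cs ! c)) ! p) q = Some (Box B)"
    from st c have "subtree T (a @ [c]) = Some (cs ! c)" by (simp add: subtree_append)
    with p qB pos sub st c u have "dcorr T (a @ [c], side, p, q) (a, side', p', pre @ q)"
      unfolding dcorr_def by (simp add: is_occ_def fm_at_simp subfm_append)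
    then show "family T (a, side', p', pre @ q) = family T (a @ [c], side, p, q)"
      by (simp add: family_dcorr)
  qed
qed

lemma family_label_fm_cut:
  assumes T: "valid b T" and st: "subtree T a = Some (Node (Cut A j k) s cs)" and two: "length cs = 2"
  shows "j < length (snd (concl (cs ! 0)))" and "k < length (fst (concl (cs ! 1)))"
    and "snd (family_lpremises T a cs ! 0) ! j = fst (family_lpremises T a cs ! 1) ! k"
proof -
  from valid_subtree[OF T st] have "step_ok (Cut A j k) s (map concl cs)" by simp
  then have cons: "up_consistent subfm (Cut A j k) s (map concl cs)" by (rule step_ok_up_consistent)
  with two have j: "j < length (snd (concl (cs ! 0)))" and k: "k < length (fst (concl (cs ! 1)))"
    and same: "snd (concl (cs ! 0)) ! j = fst (concl (cs ! 1)) ! k"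
    by (auto simp: up_consistent_def)
  from j k show "j < length (snd (concl (cs ! 0)))" "k < length (fst (concl (cs ! 1)))" .
  have "label_fm (\<lambda>q. family T (a @ [0], True, j, q)) (snd (concl (cs ! 0)) ! j) =
    label_fm (\<lambda>q. family T (a @ [1], False, k, q)) (snd (concl (cs ! 0)) ! j)"
  proof (rule label_fm_cong)
    fix q B assume "subfm (snd (concl (cs ! 0)) ! j) q = Some (Box B)"
    with st two j k same have "dcorr T (a @ [0], True, j, q) (a @ [1], False, k, q)"
      unfolding dcorr_def by (simp add: is_occ_def fm_at_simp seq_side_def subtree_append)
    then show "family T (a @ [0], True, j, q) = family T (a @ [1], False, k, q)"
      by (rule family_dcorr)
  qed
  with j k same two show "snd (family_lpremises T a cs ! 0) ! j = fst (family_lpremises T a cs ! 1) ! k"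
    by (simp add: family_lpremises_def family_lseq_def)
qed

lemma up_consistent_family_lseq:
  assumes T: "valid b T" and st: "subtree T a = Some (Node r s cs)"
  shows "up_consistent lsubfm r (family_lseq T a s) (family_lpremises T a cs)"
  unfolding up_consistent_def
proof (rule conjI; intro allI impI)
  fix c side p side' p' pre
  assume "c < length (family_lpremises T a cs)"
    and "p < length (seq_side side (family_lpremises T a cs ! c))"
    and u: "up r c side p = Some (side', p', pre)"
  then have c: "c < length cs" and p: "p < length (seq_side side (concl (cs ! c)))"
    by (simp_all add: family_lpremises_def)
  from family_label_fm_up[OF T st c p u] c p
  show "p' < length (seq_side side' (family_lseq T a s)) \<and>
    lsubfm (seq_side side' (family_lseq T a s) ! p') pre =
    Some (seq_side side (family_lpremises T a cs ! c) ! p)"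
    by (simp add: lsubfm_label_fm family_lpremises_def)
next
  fix A j k
  assume r: "r = Cut A j k" and "length (family_lpremises T a cs) = 2"
  then have two: "length cs = 2" by (simp add: family_lpremises_def)
  from family_label_fm_cut[OF T st[unfolded r] two] two
  show "j < length (snd (family_lpremises T a cs ! 0)) \<and> k < length (fst (family_lpremises T a cs ! 1)) \<and>
    snd (family_lpremises T a cs ! 0) ! j = fst (family_lpremises T a cs ! 1) ! k"
    by (simp add: family_lpremises_def family_lseq_def)
qed

lemma box_labels_ok_family_lseq:
  assumes T: "valid b T" and st: "subtree T a = Some (Node r s cs)"
  shows "box_labels_ok (prehist T)\<^sup>+\<^sup>+ r (family_lseq T a s) (family_lpremises T a cs)"
  unfolding box_labels_ok_def
proof (intro allI impI ballI)
  fix ss i l A x k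
  assume r: "r = BoxR ss i" and e: "snd (family_lseq T a s) ! i = LBox l A"
    and x: "x \<in> set (fst (family_lpremises T a cs ! 0)) \<union> set (snd (family_lpremises T a cs ! 0))"
    and k: "k \<in> labels x"
  obtain L R where s: "s = (L, R)" by (cases s)
  from valid_subtree[OF T st] r s obtain A0 where
    h: "i < length R" "R ! i = Box A0" "map concl cs = [(map (nth L) ss, [A0])]"
    by auto
  then obtain t0 where t0: "cs = [t0]" "concl t0 = (map (nth L) ss, [A0])" by auto
  from e h s have l: "l = family T (a, True, i, [])" by (simp add: family_lseq_def)
  have boxG: "box_occ T (a, True, i, [])" using st h s by (simp add: box_occ_def fm_at_simp seq_side_def)
  from x t0 consider "x \<in> set (seq_side False (family_lseq T (a @ [0]) (concl t0)))"
    | "x \<in> set (seq_side True (family_lseq T (a @ [0]) (concl t0)))"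
    by (auto simp: family_lpremises_def seq_side_def)
  then obtain side where "x \<in> set (seq_side side (family_lseq T (a @ [0]) (concl t0)))" by metis
  then obtain p where p: "p < length (seq_side side (concl t0))"
    "x = label_fm (\<lambda>q. family T (a @ [0], side, p, q)) (seq_side side (concl t0) ! p)"
    by (auto simp: in_set_conv_nth)
  from labels_label_fm[OF k[unfolded p(2)]] obtain q B where
    qB: "subfm (seq_side side (concl t0) ! p) q = Some (Box B)" "k = family T (a @ [0], side, p, q)"
    by blast
  have boxF: "box_occ T (a @ [0], side, p, q)"
    using st t0 p(1) qB(1) by (simp add: box_occ_def fm_at_simp subtree_append)
  have "prehist T k l"
    unfolding prehist_def
  proof (intro conjI)
    show "k \<in> families T" using boxF qB(2) by (auto simp: families_def)
    show "l \<in> families T" using boxG l by (auto simp: families_def)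
    show "\<exists>a ss i s cs oc. subtree T a = Some (Node (BoxR ss i) s cs) \<and> (a, True, i, []) \<in> l \<and>
        box_occ T oc \<and> fst oc = a @ [0] \<and> oc \<in> k"
      using st r boxG boxF l qB(2)
      by (intro exI[of _ a] exI[of _ ss] exI[of _ i] exI[of _ s] exI[of _ cs]
          exI[of _ "(a @ [0], side, p, q)"]) (simp add: family_def corr_def)
  qed
  then show "(prehist T)\<^sup>+\<^sup>+ k l" by (rule tranclp.r_into_trancl)
qed

lemma lder_family_lseq:
  assumes T: "valid True T"
  shows "subtree T a = Some t \<Longrightarrow> valid False t \<Longrightarrow>
    lprov (prehist T)\<^sup>+\<^sup>+ (mset (fst (family_lseq T a (concl t)))) (mset (snd (family_lseq T a (concl t))))"
proof (induction t arbitrary: a)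
  case (Node r s cs)
  have "\<forall>p\<in>set (family_lpremises T a cs). lprov (prehist T)\<^sup>+\<^sup>+ (mset (fst p)) (mset (snd p))"
  proof
    fix p assume "p \<in> set (family_lpremises T a cs)"
    then obtain c where c: "c < length cs" "p = family_lseq T (a @ [c]) (concl (cs ! c))"
      by (auto simp: family_lpremises_def)
    moreover have "subtree T (a @ [c]) = Some (cs ! c)" using Node.prems(1) c by (simp add: subtree_append)
    moreover have "valid False (cs ! c)" using Node.prems(2) c by (simp add: list_all_length)
    ultimately show "lprov (prehist T)\<^sup>+\<^sup>+ (mset (fst p)) (mset (snd p))"
      using Node.IH by auto
  qed
  moreover have "lstep_ok r (family_lseq T a s) (family_lpremises T a cs)"
    using Node.prems(2) by (intro lstep_ok_if_unlabel up_consistent_family_lseq[OF T Node.prems(1)]) simp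
  moreover have "\<not> is_cut r" using Node.prems(2) by simp
  ultimately show ?case
    using lder_lstep box_labels_ok_family_lseq[OF T Node.prems(1)] by (metis concl.simps)
qed

lemma family_lseq_cut_premises:
  assumes T_valid: "valid True T" and T: "T = Node (Cut A j k) s [TL, TR]"
  obtains A' where
    "family_lseq T [0] (concl TL) = (fst (family_lseq T [] s), ins j A' (snd (family_lseq T [] s)))"
    "family_lseq T [1] (concl TR) = (ins k A' (fst (family_lseq T [] s)), snd (family_lseq T [] s))"
proof -
  have "subtree T [] = Some (Node (Cut A j k) s [TL, TR])" using T by simp
  from up_consistent_family_lseq[OF T_valid this] T_valid T
  have "lstep_ok (Cut A j k) (family_lseq T [] s) (family_lpremises T [] [TL, TR])"
    by (intro lstep_ok_if_unlabel) simp_all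
  with that show thesis
    by (cases "family_lseq T [] s") (auto simp: family_lpremises_def numeral_2_eq_2)
qed

theorem mainTheorem4:
  fixes \<Gamma> \<Delta> :: "'a fm multiset" and A :: "'a fm"
    and TL TR T :: "'a ptree" and L R :: "'a fm list" and j k :: nat
  assumes "mset L = \<Gamma>" and "mset R = \<Delta>"
    and "valid False TL" and "seq_mset (concl TL) = (\<Gamma>, \<Delta> + {#A#})"
    and "valid False TR" and "seq_mset (concl TR) = (\<Gamma> + {#A#}, \<Delta>)"
    and "T = Node (Cut A j k) (L, R) [TL, TR]"
    and "valid True T"
    and "prehist_cycle_free T"
  shows "\<exists>T'. valid False T' \<and> seq_mset (concl T') = (\<Gamma>, \<Delta>) \<and> prehist_cycle_free T'"
proof -
  define rel where "rel = (prehist T)\<^sup>+\<^sup>+"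
  have trans: "transp rel" unfolding rel_def by (rule transpI) (rule tranclp_trans)
  have irrefl: "\<not> rel F F" for F using assms(9) by (simp add: rel_def prehist_cycle_free_iff)
  obtain L' R' where LR': "family_lseq T [] (L, R) = (L', R')" by fastforce
  from assms(8,7) obtain A' where
    "family_lseq T [0] (concl TL) = (L', ins j A' R')" "family_lseq T [1] (concl TR) = (ins k A' L', R')"
    by (rule family_lseq_cut_premises) (simp_all add: LR')
  with lder_family_lseq[OF assms(8), of "[0]" TL] lder_family_lseq[OF assms(8), of "[1]" TR] assms(3,5,7)
  have "lprov rel (mset L') (add_mset A' (mset R'))" "lprov rel (add_mset A' (mset L')) (mset R')"
    by (simp_all add: rel_def)
  then obtain n where "lder rel n (mset L') (mset R')" using lder_cut[OF trans] by blast
  then obtain t where t: "lvalid rel t" "lconcl t = (L', R')" using lvalid_of_lder by blast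
  from LR' have "unlabel_seq (L', R') = (L, R)" by (metis unlabel_family_lseq)
  with t assms(1,2) show ?thesis
    using valid_erase[OF t(1)] prehist_cycle_free_erase[OF t(1) trans irrefl]
    by (intro exI[of _ "erase t"]) (simp add: seq_mset_def)
qed

end
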